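(* Let $\mathcal{G}$ be a finite groupoid, $R$ a unital ring, $\alpha=(\{D_g\},\{\alpha_g\},\{w_{g,h}\})$ a globalizable groupoid twisted partial action of $\mathcal{G}$ on $R$, and $\beta=(\{E_g\},\{\beta_g\},\{u_{g,h}\})$ a globalization of $\alpha$, a groupoid twisted global action of $\mathcal{G}$ on a ring $T$. Then the rings $R \rtimes_{\alpha,w} \mathcal{G}$ and $T \rtimes_{\beta,u} \mathcal{G}$ are Morita equivalent.
   Context: Rings are associative, not necessarily unital. Groupoid: nonempty set $\mathcal{G}$ with partial associative product, each $g$ having right identity $d(g)=g^{-1}g$, left identity $r(g)=gg^{-1}$ and inverse $g^{-1}$; $gh$ defined iff $d(g)=r(h)$; $\mathcal{G}_0$ identities, $\mathcal{G}^2$ composable pairs, $\mathcal{G}^3$ composable triples. $\mathcal{M}(A)$ denotes the multiplier ring of a ring $A$ (pairs $(R,L)$, $R$ a right-module endomorphism written on the right, $L$ a left-module endomorphism, $(aR)b=a(Lb)$; $aw=(a)R$, $wa=L(a)$). A groupoid twisted partial action of $\mathcal{G}$ on $R$: $(\{D_g\},\{\alpha_g\},\{w_{g,h}\})$ with $D_{r(g)}$ an ideal of $R$, $D_g$ an ideal of $D_{r(g)}$, $\alpha_g:D_{g^{-1}}\to D_g$ ring isomorphisms, $w_{g,h}$ invertible in $\mathcal{M}(D_gD_{gh})$ for $(g,h)\in\mathcal{G}^2$, such that for all $(g,h,t)\in\mathcal{G}^3$: $D_g^2=D_g$, $D_gD_h=D_hD_g$; $D_e=D_{r(e)}$, $\alpha_e=\mathrm{id}$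 ($e\in\mathcal{G}_0$); $\alpha_g(D_{g^{-1}}D_h)=D_gD_{gh}$; $\alpha_g\alpha_h(a)=w_{g,h}\alpha_{gh}(a)w_{g,h}^{-1}$ for $a\in D_{h^{-1}}D_{h^{-1}g^{-1}}$; $w_{r(g),g}=w_{g,d(g)}=\mathrm{id}_{\mathcal{M}(D_g)}$; $\alpha_g(aw_{h,t})w_{g,ht}=\alpha_g(a)w_{g,h}w_{gh,t}$ for $a\in D_{g^{-1}}D_hD_{ht}$. It is global if $D_g=D_{r(g)}$ for all $g$. A global action $\beta$ on $T$ is a globalization of $\alpha$ (and $\alpha$ is globalizable) if there are ring monomorphisms $\varphi_e:D_e\to E_e$ ($e\in\mathcal{G}_0$) with: $\varphi_e(D_e)$ an ideal of $E_e$; $E_g=\sum_{r(h)=r(g)}\beta_h(\varphi_{d(h)}(D_{d(h)}))$; $\varphi_{r(g)}(D_g)=\varphi_{r(g)}(D_{r(g)})\cap\beta_g(\varphi_{d(g)}(D_{d(g)}))$; $\beta_g\varphi_{d(g)}=\varphi_{r(g)}\alpha_g$ on $D_{g^{-1}}$; $\varphi_{r(g)}(aw_{g,h})=\varphi_{r(g)}(a)u_{g,h}$, $\varphi_{r(g)}(w_{g,h}a)=u_{g,h}\varphi_{r(g)}(a)$ for $a\in D_gD_{gh}$. Twisted crossed product $R\rtimes_{\alpha,w}\mathcal{G}=\bigoplus_gD_g\delta_g$ with $(a_g\delta_g)(b_h\delta_h)=\alpha_g(\alpha_g^{-1}(a_g)b_h)w_{g,h}\delta_{gh}$ if $(g,h)\in\mathcal{G}^2$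 and $0$ otherwise; similarly for $T\rtimes_{\beta,u}\mathcal{G}$. Two rings are Morita equivalent if there is a Morita context between them with both pairings surjective (equivalently, their module categories are equivalent). *)

theory Defs
  imports "HOL-Algebra.Ring"
begin

definition rng :: "('a,'c) ring_scheme \<Rightarrow> bool" where
  "rng R \<longleftrightarrow> abelian_group R \<and>
     (\<forall>x\<in>carrier R. \<forall>y\<in>carrier R. x \<otimes>\<^bsub>R\<^esub> y \<in> carrier R \<and>
        (\<forall>z\<in>carrier R. (x \<otimes>\<^bsub>R\<^esub> y) \<otimes>\<^bsub>R\<^esub> z = x \<otimes>\<^bsub>R\<^esub> (y \<otimes>\<^bsub>R\<^esub> z)
           \<and> (x \<oplus>\<^bsub>R\<^esub> y) \<otimes>\<^bsub>R\<^esub> z = x \<otimes>\<^bsub>R\<^esub> z \<oplus>\<^bsub>R\<^esub> y \<otimes>\<^bsub>R\<^esub> z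
           \<and> z \<otimes>\<^bsub>R\<^esub> (x \<oplus>\<^bsub>R\<^esub> y) = z \<otimes>\<^bsub>R\<^esub> x \<oplus>\<^bsub>R\<^esub> z \<otimes>\<^bsub>R\<^esub> y))"

definition rng_ideal :: "'a set \<Rightarrow> ('a,'c) ring_scheme \<Rightarrow> bool" where
  "rng_ideal I R \<longleftrightarrow> I \<subseteq> carrier R \<and> \<zero>\<^bsub>R\<^esub> \<in> I \<and>
     (\<forall>x\<in>I. \<forall>y\<in>I. x \<oplus>\<^bsub>R\<^esub> y \<in> I) \<and> (\<forall>x\<in>I. \<ominus>\<^bsub>R\<^esub> x \<in> I) \<and>
     (\<forall>x\<in>I. \<forall>r\<in>carrier R. r \<otimes>\<^bsub>R\<^esub> x \<in> I \<and> x \<otimes>\<^bsub>R\<^esub> r \<in> I)"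

inductive_set add_span :: "('a,'c) ring_scheme \<Rightarrow> 'a set \<Rightarrow> 'a set"
  for R :: "('a,'c) ring_scheme" and S :: "'a set" where
  span_zero: "\<zero>\<^bsub>R\<^esub> \<in> add_span R S"
| span_gen: "x \<in> S \<Longrightarrow> x \<in> add_span R S"
| span_add: "x \<in> add_span R S \<Longrightarrow> y \<in> add_span R S \<Longrightarrow> x \<oplus>\<^bsub>R\<^esub> y \<in> add_span R S"
| span_neg: "x \<in> add_span R S \<Longrightarrow> \<ominus>\<^bsub>R\<^esub> x \<in> add_span R S"

definition set_prod :: "('a,'c) ring_scheme \<Rightarrow> 'a set \<Rightarrow> 'a set \<Rightarrow> 'a set" where
  "set_prod R I J = add_span R {x \<otimes>\<^bsub>R\<^esub> y | x y. x \<in> I \<and> y \<in> J}"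

definition rng_hom_on :: "('a,'c) ring_scheme \<Rightarrow> ('b,'d) ring_scheme \<Rightarrow> 'a set \<Rightarrow> ('a \<Rightarrow> 'b) \<Rightarrow> bool" where
  "rng_hom_on R S A f \<longleftrightarrow> (\<forall>x\<in>A. \<forall>y\<in>A. f (x \<oplus>\<^bsub>R\<^esub> y) = f x \<oplus>\<^bsub>S\<^esub> f y \<and>
                                       f (x \<otimes>\<^bsub>R\<^esub> y) = f x \<otimes>\<^bsub>S\<^esub> f y)"

text \<open>A multiplier of the ideal A of R is a pair (Rm, Lm); a w = Rm a (right action),
  w a = Lm a (left action).\<close>
definition is_multiplier :: "('a,'c) ring_scheme \<Rightarrow> 'a set \<Rightarrow> ('a \<Rightarrow> 'a) \<times> ('a \<Rightarrow> 'a) \<Rightarrow> bool" where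
  "is_multiplier R A w \<longleftrightarrow>
     (\<forall>a\<in>A. fst w a \<in> A \<and> snd w a \<in> A) \<and>
     (\<forall>a\<in>A. \<forall>b\<in>A.
        fst w (a \<oplus>\<^bsub>R\<^esub> b) = fst w a \<oplus>\<^bsub>R\<^esub> fst w b \<and>
        snd w (a \<oplus>\<^bsub>R\<^esub> b) = snd w a \<oplus>\<^bsub>R\<^esub> snd w b \<and>
        fst w (a \<otimes>\<^bsub>R\<^esub> b) = a \<otimes>\<^bsub>R\<^esub> fst w b \<and>
        snd w (a \<otimes>\<^bsub>R\<^esub> b) = snd w a \<otimes>\<^bsub>R\<^esub> b \<and>
        fst w a \<otimes>\<^bsub>R\<^esub> b = a \<otimes>\<^bsub>R\<^esub> snd w b)"

text \<open>w' is an inverse of w in M(A). Product in M(A): a(ww') = (aw)w', (ww')a = w(w'a).\<close>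
definition mult_inverse :: "('a,'c) ring_scheme \<Rightarrow> 'a set \<Rightarrow> ('a \<Rightarrow> 'a) \<times> ('a \<Rightarrow> 'a)
    \<Rightarrow> ('a \<Rightarrow> 'a) \<times> ('a \<Rightarrow> 'a) \<Rightarrow> bool" where
  "mult_inverse R A w w' \<longleftrightarrow> is_multiplier R A w' \<and>
     (\<forall>a\<in>A. fst w' (fst w a) = a \<and> fst w (fst w' a) = a \<and>
             snd w (snd w' a) = a \<and> snd w' (snd w a) = a)"

definition invertible_multiplier :: "('a,'c) ring_scheme \<Rightarrow> 'a set \<Rightarrow> ('a \<Rightarrow> 'a) \<times> ('a \<Rightarrow> 'a) \<Rightarrow> bool" where
  "invertible_multiplier R A w \<longleftrightarrow> is_multiplier R A w \<and> (\<exists>w'. mult_inverse R A w w')"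

definition gdom :: "('g \<Rightarrow> 'g \<Rightarrow> 'g) \<Rightarrow> ('g \<Rightarrow> 'g) \<Rightarrow> 'g \<Rightarrow> 'g" where
  "gdom m i g = m (i g) g"

definition gran :: "('g \<Rightarrow> 'g \<Rightarrow> 'g) \<Rightarrow> ('g \<Rightarrow> 'g) \<Rightarrow> 'g \<Rightarrow> 'g" where
  "gran m i g = m g (i g)"

definition composable :: "('g \<Rightarrow> 'g \<Rightarrow> 'g) \<Rightarrow> ('g \<Rightarrow> 'g) \<Rightarrow> 'g \<Rightarrow> 'g \<Rightarrow> bool" where
  "composable m i g h \<longleftrightarrow> gdom m i g = gran m i h"

text \<open>Groupoid (Exel-style axioms): G nonempty, with inverse i and partial product m,
  defined exactly on pairs with d(g) = r(h).\<close>
definition groupoid :: "'g set \<Rightarrow> ('g \<Rightarrow> 'g \<Rightarrow> 'g) \<Rightarrow> ('g \<Rightarrow> 'g) \<Rightarrow> bool" where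
  "groupoid G m i \<longleftrightarrow> G \<noteq> {} \<and>
     (\<forall>g\<in>G. i g \<in> G \<and> i (i g) = g) \<and>
     (\<forall>g\<in>G. \<forall>h\<in>G. composable m i g h \<longrightarrow>
         m g h \<in> G \<and> m (i g) (m g h) = h \<and> m (m g h) (i h) = g) \<and>
     (\<forall>g\<in>G. \<forall>h\<in>G. \<forall>t\<in>G. composable m i g h \<and> composable m i h t \<longrightarrow>
         composable m i (m g h) t \<and> composable m i g (m h t) \<and> m (m g h) t = m g (m h t))"

definition identities :: "'g set \<Rightarrow> ('g \<Rightarrow> 'g \<Rightarrow> 'g) \<Rightarrow> ('g \<Rightarrow> 'g) \<Rightarrow> 'g set" where
  "identities G m i = gdom m i ` G"

definition twisted_partial_action ::
  "'g set \<Rightarrow> ('g \<Rightarrow> 'g \<Rightarrow> 'g) \<Rightarrow> ('g \<Rightarrow> 'g) \<Rightarrow> ('a,'c) ring_scheme \<Rightarrow> ('g \<Rightarrow> 'a set) \<Rightarrow>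
   ('g \<Rightarrow> 'a \<Rightarrow> 'a) \<Rightarrow> ('g \<Rightarrow> 'g \<Rightarrow> ('a \<Rightarrow> 'a) \<times> ('a \<Rightarrow> 'a)) \<Rightarrow> bool" where
  "twisted_partial_action G m i R D \<alpha> w \<longleftrightarrow>
     (\<forall>g\<in>G. rng_ideal (D (gran m i g)) R) \<and>
     (\<forall>g\<in>G. rng_ideal (D g) (R\<lparr>carrier := D (gran m i g)\<rparr>)) \<and>
     (\<forall>g\<in>G. bij_betw (\<alpha> g) (D (i g)) (D g) \<and> rng_hom_on R R (D (i g)) (\<alpha> g)) \<and>
     (\<forall>g\<in>G. \<forall>h\<in>G. composable m i g h \<longrightarrow>
        invertible_multiplier R (set_prod R (D g) (D (m g h))) (w g h)) \<and>
     (\<forall>e\<in>identities G m i. D e = D (gran m i e) \<and> (\<forall>a\<in>D e. \<alpha> e a = a)) \<and>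
     (\<forall>g\<in>G. \<forall>h\<in>G. \<forall>t\<in>G. composable m i g h \<and> composable m i h t \<longrightarrow>
        set_prod R (D g) (D g) = D g \<and>
        set_prod R (D g) (D h) = set_prod R (D h) (D g) \<and>
        \<alpha> g ` set_prod R (D (i g)) (D h) = set_prod R (D g) (D (m g h)) \<and>
        (\<forall>a\<in>set_prod R (D (i h)) (D (m (i h) (i g))). \<forall>w'.
            mult_inverse R (set_prod R (D g) (D (m g h))) (w g h) w' \<longrightarrow>
            \<alpha> g (\<alpha> h a) = fst w' (snd (w g h) (\<alpha> (m g h) a))) \<and>
        (\<forall>a\<in>D g. fst (w (gran m i g) g) a = a \<and> snd (w (gran m i g) g) a = a \<and>
                  fst (w g (gdom m i g)) a = a \<and> snd (w g (gdom m i g)) a = a) \<and>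
        (\<forall>a\<in>set_prod R (set_prod R (D (i g)) (D h)) (D (m h t)).
            fst (w g (m h t)) (\<alpha> g (fst (w h t) a)) =
            fst (w (m g h) t) (fst (w g h) (\<alpha> g a))))"

definition global_action ::
  "'g set \<Rightarrow> ('g \<Rightarrow> 'g \<Rightarrow> 'g) \<Rightarrow> ('g \<Rightarrow> 'g) \<Rightarrow> ('g \<Rightarrow> 'a set) \<Rightarrow> bool" where
  "global_action G m i D \<longleftrightarrow> (\<forall>g\<in>G. D g = D (gran m i g))"

definition ideal_sum :: "('a,'c) ring_scheme \<Rightarrow> 'a set set \<Rightarrow> 'a set" where
  "ideal_sum R S = add_span R (\<Union>S)"

definition is_globalization ::
  "'g set \<Rightarrow> ('g \<Rightarrow> 'g \<Rightarrow> 'g) \<Rightarrow> ('g \<Rightarrow> 'g) \<Rightarrow>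
   ('a,'c) ring_scheme \<Rightarrow> ('g \<Rightarrow> 'a set) \<Rightarrow> ('g \<Rightarrow> 'a \<Rightarrow> 'a) \<Rightarrow> ('g \<Rightarrow> 'g \<Rightarrow> ('a \<Rightarrow> 'a) \<times> ('a \<Rightarrow> 'a)) \<Rightarrow>
   ('b,'d) ring_scheme \<Rightarrow> ('g \<Rightarrow> 'b set) \<Rightarrow> ('g \<Rightarrow> 'b \<Rightarrow> 'b) \<Rightarrow> ('g \<Rightarrow> 'g \<Rightarrow> ('b \<Rightarrow> 'b) \<times> ('b \<Rightarrow> 'b)) \<Rightarrow>
   ('g \<Rightarrow> 'a \<Rightarrow> 'b) \<Rightarrow> bool" where
  "is_globalization G m i R D \<alpha> w T E \<beta> u \<phi> \<longleftrightarrow>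
     twisted_partial_action G m i T E \<beta> u \<and> global_action G m i E \<and>
     (\<forall>e\<in>identities G m i.
        inj_on (\<phi> e) (D e) \<and> \<phi> e ` D e \<subseteq> E e \<and> rng_hom_on R T (D e) (\<phi> e) \<and>
        rng_ideal (\<phi> e ` D e) (T\<lparr>carrier := E e\<rparr>)) \<and>
     (\<forall>g\<in>G.
        E g = ideal_sum T {\<beta> h ` (\<phi> (gdom m i h) ` D (gdom m i h)) | h. h \<in> G \<and> gran m i h = gran m i g} \<and>
        \<phi> (gran m i g) ` D g = \<phi> (gran m i g) ` D (gran m i g) \<inter> \<beta> g ` (\<phi> (gdom m i g) ` D (gdom m i g)) \<and>
        (\<forall>a\<in>D (i g). \<beta> g (\<phi> (gdom m i g) a) = \<phi> (gran m i g) (\<alpha> g a))) \<and>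
     (\<forall>g\<in>G. \<forall>h\<in>G. composable m i g h \<longrightarrow>
        (\<forall>a\<in>set_prod R (D g) (D (m g h)).
           \<phi> (gran m i g) (fst (w g h) a) = fst (u g h) (\<phi> (gran m i g) a) \<and>
           \<phi> (gran m i g) (snd (w g h) a) = snd (u g h) (\<phi> (gran m i g) a)))"

text \<open>Elements of the direct sum of D_g delta_g are represented as functions f with
  f g in D g for g in G and f g = 0 outside G (G finite).\<close>
definition crossed_product ::
  "'g set \<Rightarrow> ('g \<Rightarrow> 'g \<Rightarrow> 'g) \<Rightarrow> ('g \<Rightarrow> 'g) \<Rightarrow> ('a,'c) ring_scheme \<Rightarrow> ('g \<Rightarrow> 'a set) \<Rightarrow>
   ('g \<Rightarrow> 'a \<Rightarrow> 'a) \<Rightarrow> ('g \<Rightarrow> 'g \<Rightarrow> ('a \<Rightarrow> 'a) \<times> ('a \<Rightarrow> 'a)) \<Rightarrow> ('g \<Rightarrow> 'a) ring" where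
  "crossed_product G m i R D \<alpha> w =
    \<lparr>carrier = {f. (\<forall>g\<in>G. f g \<in> D g) \<and> (\<forall>g. g \<notin> G \<longrightarrow> f g = \<zero>\<^bsub>R\<^esub>)},
     mult = (\<lambda>f f' k. finsum R
               (\<lambda>p. fst (w (fst p) (snd p))
                       (\<alpha> (fst p) (inv_into (D (i (fst p))) (\<alpha> (fst p)) (f (fst p)) \<otimes>\<^bsub>R\<^esub> f' (snd p))))
               {(g, h). g \<in> G \<and> h \<in> G \<and> composable m i g h \<and> m g h = k}),
     one = (\<lambda>_. \<zero>\<^bsub>R\<^esub>),
     zero = (\<lambda>_. \<zero>\<^bsub>R\<^esub>),
     add = (\<lambda>f f' g. f g \<oplus>\<^bsub>R\<^esub> f' g)\<rparr>"

definition bimodule :: "('a,'c) ring_scheme \<Rightarrow> ('b,'d) ring_scheme \<Rightarrow> ('m,'e) ring_scheme \<Rightarrow>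
    ('a \<Rightarrow> 'm \<Rightarrow> 'm) \<Rightarrow> ('m \<Rightarrow> 'b \<Rightarrow> 'm) \<Rightarrow> bool" where
  "bimodule A B M la ra \<longleftrightarrow> abelian_group M \<and>
     (\<forall>a\<in>carrier A. \<forall>x\<in>carrier M. la a x \<in> carrier M) \<and>
     (\<forall>x\<in>carrier M. \<forall>b\<in>carrier B. ra x b \<in> carrier M) \<and>
     (\<forall>a\<in>carrier A. \<forall>a'\<in>carrier A. \<forall>x\<in>carrier M.
        la (a \<oplus>\<^bsub>A\<^esub> a') x = la a x \<oplus>\<^bsub>M\<^esub> la a' x \<and> la (a \<otimes>\<^bsub>A\<^esub> a') x = la a (la a' x)) \<and>
     (\<forall>a\<in>carrier A. \<forall>x\<in>carrier M. \<forall>y\<in>carrier M. la a (x \<oplus>\<^bsub>M\<^esub> y) = la a x \<oplus>\<^bsub>M\<^esub> la a y) \<and>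
     (\<forall>b\<in>carrier B. \<forall>b'\<in>carrier B. \<forall>x\<in>carrier M.
        ra x (b \<oplus>\<^bsub>B\<^esub> b') = ra x b \<oplus>\<^bsub>M\<^esub> ra x b' \<and> ra x (b \<otimes>\<^bsub>B\<^esub> b') = ra (ra x b) b') \<and>
     (\<forall>b\<in>carrier B. \<forall>x\<in>carrier M. \<forall>y\<in>carrier M. ra (x \<oplus>\<^bsub>M\<^esub> y) b = ra x b \<oplus>\<^bsub>M\<^esub> ra y b) \<and>
     (\<forall>a\<in>carrier A. \<forall>x\<in>carrier M. \<forall>b\<in>carrier B. ra (la a x) b = la a (ra x b))"

text \<open>Balanced biadditive bimodule pairing M x N -> A (= A-bimodule map M (x)_B N -> A).\<close>
definition pairing :: "('a,'c) ring_scheme \<Rightarrow> ('b,'d) ring_scheme \<Rightarrow> ('m,'e) ring_scheme \<Rightarrow> ('n,'f) ring_scheme \<Rightarrow>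
    ('a \<Rightarrow> 'm \<Rightarrow> 'm) \<Rightarrow> ('m \<Rightarrow> 'b \<Rightarrow> 'm) \<Rightarrow> ('b \<Rightarrow> 'n \<Rightarrow> 'n) \<Rightarrow> ('n \<Rightarrow> 'a \<Rightarrow> 'n) \<Rightarrow>
    ('m \<Rightarrow> 'n \<Rightarrow> 'a) \<Rightarrow> bool" where
  "pairing A B M N la ra la' ra' \<tau> \<longleftrightarrow>
     (\<forall>x\<in>carrier M. \<forall>y\<in>carrier N. \<tau> x y \<in> carrier A) \<and>
     (\<forall>x\<in>carrier M. \<forall>x'\<in>carrier M. \<forall>y\<in>carrier N. \<tau> (x \<oplus>\<^bsub>M\<^esub> x') y = \<tau> x y \<oplus>\<^bsub>A\<^esub> \<tau> x' y) \<and>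
     (\<forall>x\<in>carrier M. \<forall>y\<in>carrier N. \<forall>y'\<in>carrier N. \<tau> x (y \<oplus>\<^bsub>N\<^esub> y') = \<tau> x y \<oplus>\<^bsub>A\<^esub> \<tau> x y') \<and>
     (\<forall>x\<in>carrier M. \<forall>y\<in>carrier N. \<forall>b\<in>carrier B. \<tau> (ra x b) y = \<tau> x (la' b y)) \<and>
     (\<forall>x\<in>carrier M. \<forall>y\<in>carrier N. \<forall>a\<in>carrier A.
        \<tau> (la a x) y = a \<otimes>\<^bsub>A\<^esub> \<tau> x y \<and> \<tau> x (ra' y a) = \<tau> x y \<otimes>\<^bsub>A\<^esub> a)"

definition morita_context :: "('a,'c) ring_scheme \<Rightarrow> ('b,'d) ring_scheme \<Rightarrow> ('m,'e) ring_scheme \<Rightarrow> ('n,'f) ring_scheme \<Rightarrow>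
    ('a \<Rightarrow> 'm \<Rightarrow> 'm) \<Rightarrow> ('m \<Rightarrow> 'b \<Rightarrow> 'm) \<Rightarrow> ('b \<Rightarrow> 'n \<Rightarrow> 'n) \<Rightarrow> ('n \<Rightarrow> 'a \<Rightarrow> 'n) \<Rightarrow>
    ('m \<Rightarrow> 'n \<Rightarrow> 'a) \<Rightarrow> ('n \<Rightarrow> 'm \<Rightarrow> 'b) \<Rightarrow> bool" where
  "morita_context A B M N la ra la' ra' \<tau> \<mu> \<longleftrightarrow>
     bimodule A B M la ra \<and> bimodule B A N la' ra' \<and>
     pairing A B M N la ra la' ra' \<tau> \<and> pairing B A N M la' ra' la ra \<mu> \<and>
     (\<forall>x\<in>carrier M. \<forall>y\<in>carrier N. \<forall>x'\<in>carrier M. la (\<tau> x y) x' = ra x (\<mu> y x')) \<and>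
     (\<forall>y\<in>carrier N. \<forall>x\<in>carrier M. \<forall>y'\<in>carrier N. la' (\<mu> y x) y' = ra' y (\<tau> x y'))"

text \<open>Morita equivalence witnessed by a Morita context whose bimodules have elements of
  the types 'm and 'n, with both pairings surjective.\<close>
definition morita_equivalent :: "('a,'c) ring_scheme \<Rightarrow> ('b,'d) ring_scheme \<Rightarrow> 'm itself \<Rightarrow> 'n itself \<Rightarrow> bool" where
  "morita_equivalent A B tm tn \<longleftrightarrow>
     (\<exists>(M :: 'm ring) (N :: 'n ring) la ra la' ra' \<tau> \<mu>.
        morita_context A B M N la ra la' ra' \<tau> \<mu> \<and>
        add_span A {\<tau> x y | x y. x \<in> carrier M \<and> y \<in> carrier N} = carrier A \<and>
        add_span B {\<mu> y x | x y. x \<in> carrier M \<and> y \<in> carrier N} = carrier B)"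

end

theory Submission
  imports Defs
begin

text \<open>Via \<open>\<phi>\<close>, the crossed product \<open>R \<rtimes> G\<close> is isomorphic to the subring
  \<open>P = \<Oplus>\<^sub>g \<phi>(D\<^sub>g) \<delta>\<^sub>g\<close> of \<open>T \<rtimes> G\<close>, because \<open>\<phi>\<close> intertwines \<open>\<alpha>\<close> with \<open>\<beta>\<close> and \<open>w\<close> with \<open>u\<close>. Put
  \<open>M = \<Oplus>\<^sub>g \<phi>(D\<^sub>r\<^sub>(\<^sub>g\<^sub>)) \<delta>\<^sub>g\<close> and \<open>N = \<Oplus>\<^sub>g \<beta>\<^sub>g(\<phi>(D\<^sub>d\<^sub>(\<^sub>g\<^sub>))) \<delta>\<^sub>g\<close>. The globalization axioms make \<open>M\<close> a
  right ideal and \<open>N\<close> a left ideal of \<open>T \<rtimes> G\<close> with \<open>P \<subseteq> M \<inter> N\<close> and \<open>M N \<subseteq> P\<close>, since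
  \<open>\<phi>(D\<^sub>g) = \<phi>(D\<^sub>r\<^sub>(\<^sub>g\<^sub>)) \<inter> \<beta>\<^sub>g(\<phi>(D\<^sub>d\<^sub>(\<^sub>g\<^sub>)))\<close>. So \<open>M\<close> and \<open>N\<close>, with multiplication in \<open>T \<rtimes> G\<close> as
  pairings, form a Morita context between \<open>P\<close> and \<open>T \<rtimes> G\<close>. Both pairings are onto because
  every \<open>D\<^sub>g\<close> is idempotent and \<open>E\<^sub>g\<close> is spanned by the \<open>\<beta>\<^sub>h(\<phi>(D\<^sub>d\<^sub>(\<^sub>h\<^sub>)))\<close> with \<open>r(h) = r(g)\<close>.\<close>

section \<open>Non-unital rings, additive spans and multipliers\<close>

locale nonunital_ring = fixes S (structure) assumes rng: "rng S"
begin

lemma is_abelian_group: "abelian_group S"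
  using rng unfolding rng_def by blast

sublocale abelian_group S by (rule is_abelian_group)

lemma m_closed [simp, intro]: "x \<in> carrier S \<Longrightarrow> y \<in> carrier S \<Longrightarrow> x \<otimes> y \<in> carrier S"
  using rng unfolding rng_def by blast

lemma m_assoc: "x \<in> carrier S \<Longrightarrow> y \<in> carrier S \<Longrightarrow> z \<in> carrier S \<Longrightarrow> (x \<otimes> y) \<otimes> z = x \<otimes> (y \<otimes> z)"
  using rng unfolding rng_def by blast

lemma l_distr: "x \<in> carrier S \<Longrightarrow> y \<in> carrier S \<Longrightarrow> z \<in> carrier S \<Longrightarrow> (x \<oplus> y) \<otimes> z = x \<otimes> z \<oplus> y \<otimes> z"
  using rng unfolding rng_def by blast

lemma r_distr: "x \<in> carrier S \<Longrightarrow> y \<in> carrier S \<Longrightarrow> z \<in> carrier S \<Longrightarrow> z \<otimes> (x \<oplus> y) = z \<otimes> x \<oplus> z \<otimes> y"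
  using rng unfolding rng_def by blast

lemma a_inv_zero [simp]: "\<ominus> \<zero> = \<zero>"
  using minus_equality[of \<zero> \<zero>] by simp

lemma l_null [simp]: "x \<in> carrier S \<Longrightarrow> \<zero> \<otimes> x = \<zero>"
proof -
  assume x: "x \<in> carrier S"
  have "\<zero> \<otimes> x \<oplus> \<zero> \<otimes> x = \<zero> \<otimes> x" using l_distr[of \<zero> \<zero> x] x by simp
  then show ?thesis using x by simp
qed

lemma r_null [simp]: "x \<in> carrier S \<Longrightarrow> x \<otimes> \<zero> = \<zero>"
proof -
  assume x: "x \<in> carrier S"
  have "x \<otimes> \<zero> \<oplus> x \<otimes> \<zero> = x \<otimes> \<zero>" using r_distr[of \<zero> \<zero> x] x by simp
  then show ?thesis using x by simp
qed

end

lemma ring_imp_rng: "ring R \<Longrightarrow> rng R"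
proof -
  assume "ring R"
  then interpret ring R .
  show ?thesis unfolding rng_def
    by (auto simp: is_abelian_group l_distr r_distr m_assoc)
qed

definition add_subgroup :: "('a,'c) ring_scheme \<Rightarrow> 'a set \<Rightarrow> bool" where
  "add_subgroup S I \<longleftrightarrow> I \<subseteq> carrier S \<and> \<zero>\<^bsub>S\<^esub> \<in> I \<and>
     (\<forall>x\<in>I. \<forall>y\<in>I. x \<oplus>\<^bsub>S\<^esub> y \<in> I) \<and> (\<forall>x\<in>I. \<ominus>\<^bsub>S\<^esub> x \<in> I)"

text \<open>\<open>I\<close> is an ideal of the additive subgroup \<open>X\<close>, which need not be closed under multiplication.\<close>
definition ideal_in :: "('a,'c) ring_scheme \<Rightarrow> 'a set \<Rightarrow> 'a set \<Rightarrow> bool" where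
  "ideal_in S I X \<longleftrightarrow> add_subgroup S I \<and> I \<subseteq> X \<and>
     (\<forall>x\<in>X. \<forall>a\<in>I. x \<otimes>\<^bsub>S\<^esub> a \<in> I \<and> a \<otimes>\<^bsub>S\<^esub> x \<in> I)"

lemma add_span_least:
  assumes "add_subgroup S I" "X \<subseteq> I" shows "add_span S X \<subseteq> I"
proof
  fix x assume "x \<in> add_span S X"
  then show "x \<in> I" by (induction rule: add_span.induct) (use assms in \<open>auto simp: add_subgroup_def\<close>)
qed

lemma add_span_image_subset:
  assumes zero: "f \<zero>\<^bsub>S\<^esub> = \<zero>\<^bsub>S'\<^esub>"
    and add: "\<And>x y. x \<in> add_span S X \<Longrightarrow> y \<in> add_span S X \<Longrightarrow> f (x \<oplus>\<^bsub>S\<^esub> y) = f x \<oplus>\<^bsub>S'\<^esub> f y"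
    and neg: "\<And>x. x \<in> add_span S X \<Longrightarrow> f (\<ominus>\<^bsub>S\<^esub> x) = \<ominus>\<^bsub>S'\<^esub> f x"
    and gen: "\<And>x. x \<in> X \<Longrightarrow> f x \<in> add_span S' Y"
  shows "f ` add_span S X \<subseteq> add_span S' Y"
proof
  fix z assume "z \<in> f ` add_span S X"
  then obtain x where x: "x \<in> add_span S X" and z: "z = f x" by blast
  from x have "f x \<in> add_span S' Y"
  proof (induction rule: add_span.induct)
    case span_zero show ?case by (simp add: zero add_span.span_zero)
  next
    case (span_gen x) then show ?case by (rule gen)
  next
    case (span_add x y) then show ?case by (simp add: add add_span.span_add)
  next
    case (span_neg x) then show ?case by (simp add: neg add_span.span_neg)
  qed
  then show "z \<in> add_span S' Y" by (simp add: z)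
qed

lemma multiplier_add:
  "is_multiplier S X w \<Longrightarrow> a \<in> X \<Longrightarrow> b \<in> X \<Longrightarrow> fst w (a \<oplus>\<^bsub>S\<^esub> b) = fst w a \<oplus>\<^bsub>S\<^esub> fst w b"
  unfolding is_multiplier_def by blast

lemma set_prod_mult_mem: "x \<in> I \<Longrightarrow> y \<in> J \<Longrightarrow> x \<otimes>\<^bsub>S\<^esub> y \<in> set_prod S I J"
  unfolding set_prod_def by (auto intro: add_span.intros)

lemma ideal_in_Int: "ideal_in S I X \<Longrightarrow> ideal_in S J X \<Longrightarrow> ideal_in S (I \<inter> J) X"
  unfolding ideal_in_def add_subgroup_def by auto

lemma set_prod_subset_right: "ideal_in S J X \<Longrightarrow> I \<subseteq> X \<Longrightarrow> set_prod S I J \<subseteq> J"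
  unfolding set_prod_def by (rule add_span_least) (auto simp: ideal_in_def)

lemma (in abelian_group) add_span_subset_carrier:
  assumes "Y \<subseteq> carrier G" shows "add_span G Y \<subseteq> carrier G"
proof
  fix x assume "x \<in> add_span G Y"
  then show "x \<in> carrier G" by (induction rule: add_span.induct) (use assms in auto)
qed

lemma (in abelian_group) add_subgroup_add_span: "Y \<subseteq> carrier G \<Longrightarrow> add_subgroup G (add_span G Y)"
  using add_span_subset_carrier unfolding add_subgroup_def by (auto intro: add_span.intros)

lemma (in abelian_group) additive_map_zero:
  assumes "abelian_group S" "\<zero>\<^bsub>S\<^esub> \<in> A" "f ` A \<subseteq> carrier G"
    and "\<And>x y. x \<in> A \<Longrightarrow> y \<in> A \<Longrightarrow> f (x \<oplus>\<^bsub>S\<^esub> y) = f x \<oplus> f y"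
  shows "f \<zero>\<^bsub>S\<^esub> = \<zero>"
proof -
  interpret S: abelian_group S by fact
  have "f \<zero>\<^bsub>S\<^esub> \<oplus> f \<zero>\<^bsub>S\<^esub> = f \<zero>\<^bsub>S\<^esub>"
    using assms(2,4) by (metis S.zero_closed S.l_zero)
  then show ?thesis using assms by auto
qed

lemma (in abelian_group) additive_map_neg:
  assumes S: "abelian_group S" and A: "add_subgroup S A" and "f ` A \<subseteq> carrier G"
    and add: "\<And>x y. x \<in> A \<Longrightarrow> y \<in> A \<Longrightarrow> f (x \<oplus>\<^bsub>S\<^esub> y) = f x \<oplus> f y"
    and x: "x \<in> A"
  shows "f (\<ominus>\<^bsub>S\<^esub> x) = \<ominus> f x"
proof -
  have nx: "\<ominus>\<^bsub>S\<^esub> x \<in> A" and xS: "x \<in> carrier S" using A x by (auto simp: add_subgroup_def)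
  have "f (\<ominus>\<^bsub>S\<^esub> x) \<oplus> f x = f \<zero>\<^bsub>S\<^esub>"
    using add[OF nx x] abelian_group.l_neg[OF S xS] by simp
  also have "\<dots> = \<zero>" using additive_map_zero[OF S _ _ add] A assms(3) by (auto simp: add_subgroup_def)
  moreover have "f x \<in> carrier G" "f (\<ominus>\<^bsub>S\<^esub> x) \<in> carrier G" using assms(3) x nx by auto
  ultimately show ?thesis by (simp add: minus_equality)
qed

context nonunital_ring begin

lemma ideal_in_of_rng_ideal: "rng_ideal I S \<Longrightarrow> ideal_in S I (carrier S)"
  unfolding rng_ideal_def ideal_in_def add_subgroup_def by auto

lemma ideal_in_of_rng_ideal_restrict:
  assumes I: "rng_ideal I (S\<lparr>carrier := X\<rparr>)" and X: "add_subgroup S X"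
  shows "ideal_in S I X"
proof -
  have IX: "I \<subseteq> X" using I by (simp add: rng_ideal_def)
  have Xc: "X \<subseteq> carrier S" using X by (simp add: add_subgroup_def)
  \<comment> \<open>\<open>a_inv\<close> is defined by a description over the carrier, so restricting the carrier to a
    subgroup does not change additive inverses.\<close>
  have neg: "\<ominus>\<^bsub>S\<lparr>carrier := X\<rparr>\<^esub> x = \<ominus> x" if x: "x \<in> X" for x
  proof -
    have nx: "\<ominus> x \<in> X" and xc: "x \<in> carrier S" using X x Xc by (auto simp: add_subgroup_def)
    have "\<ominus>\<^bsub>S\<lparr>carrier := X\<rparr>\<^esub> x = (THE y. y \<in> X \<and> x \<oplus> y = \<zero> \<and> y \<oplus> x = \<zero>)"
      by (simp add: a_inv_def m_inv_def)
    also have "\<dots> = \<ominus> x"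
      by (rule the_equality) (use nx xc Xc in \<open>auto simp: l_neg r_neg dest: minus_equality\<close>)
    finally show ?thesis .
  qed
  have "\<ominus> x \<in> I" if x: "x \<in> I" for x
  proof -
    have "\<ominus>\<^bsub>S\<lparr>carrier := X\<rparr>\<^esub> x \<in> I" using I x unfolding rng_ideal_def by blast
    then show ?thesis using neg[of x] x IX by auto
  qed
  then show ?thesis using I IX Xc unfolding ideal_in_def add_subgroup_def rng_ideal_def by auto
qed

lemma finsum_closed_add_subgroup:
  assumes I: "add_subgroup S I" and fin: "finite A" and f: "\<forall>p\<in>A. f p \<in> I"
  shows "finsum S f A \<in> I"
  using fin f
proof (induction A rule: finite_induct)
  case empty then show ?case using I by (simp add: add_subgroup_def)
next
  case (insert a A)
  have "f \<in> A \<rightarrow> carrier S" "f a \<in> carrier S" using insert(4) I by (auto simp: add_subgroup_def)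
  then have "finsum S f (insert a A) = f a \<oplus> finsum S f A"
    using finsum_insert[OF insert(1,2)] by blast
  then show ?case using insert I unfolding add_subgroup_def by auto
qed

lemma multiplier_zero:
  assumes X: "add_subgroup S X" and w: "is_multiplier S X w"
  shows "fst w \<zero> = \<zero>" "snd w \<zero> = \<zero>"
  using additive_map_zero[OF is_abelian_group, of X "fst w"]
    additive_map_zero[OF is_abelian_group, of X "snd w"] X w
  unfolding is_multiplier_def add_subgroup_def by auto

lemma multiplier_neg:
  assumes X: "add_subgroup S X" and w: "is_multiplier S X w" and x: "x \<in> X"
  shows "fst w (\<ominus> x) = \<ominus> fst w x" "snd w (\<ominus> x) = \<ominus> snd w x"
  using additive_map_neg[OF is_abelian_group X, of "fst w"]
    additive_map_neg[OF is_abelian_group X, of "snd w"] X w x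
  unfolding is_multiplier_def add_subgroup_def by auto

lemma multiplier_inverse_cancel:
  assumes w: "is_multiplier S X w" and w': "mult_inverse S X w w'" and p: "p \<in> X" and z: "z \<in> X"
  shows "fst w (p \<otimes> fst w' (snd w z)) = fst w p \<otimes> z"
proof -
  have wz: "snd w z \<in> X" and "fst w' (snd w z) \<in> X"
    using w w' z unfolding is_multiplier_def mult_inverse_def by blast+
  then have "fst w (p \<otimes> fst w' (snd w z)) = p \<otimes> fst w (fst w' (snd w z))"
    using w p unfolding is_multiplier_def by blast
  also have "fst w (fst w' (snd w z)) = snd w z" using w' wz unfolding mult_inverse_def by blast
  also have "p \<otimes> snd w z = fst w p \<otimes> z" using w p z unfolding is_multiplier_def by metis
  finally show ?thesis .
qed

text \<open>Multipliers of \<open>X\<close> preserve every idempotent ideal \<open>I\<close> of \<open>X\<close>: on products,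
  \<open>(x y) w = x (y w)\<close> and \<open>w (x y) = (w x) y\<close>, and \<open>I\<close> is spanned by products.\<close>
lemma multiplier_closed_idempotent_ideal:
  assumes X: "add_subgroup S X" and w: "is_multiplier S X w" and I: "ideal_in S I X"
    and idem: "set_prod S I I = I" and a: "a \<in> I"
  shows "fst w a \<in> I \<and> snd w a \<in> I"
proof -
  have IX: "I \<subseteq> X" and Ia: "add_subgroup S I" using I by (auto simp: ideal_in_def)
  let ?P = "{x \<otimes> y | x y. x \<in> I \<and> y \<in> I}"
  have span: "add_span S ?P = I" using idem by (simp add: set_prod_def)
  have "a \<in> add_span S ?P" using a span by simp
  then show ?thesis
  proof (induction rule: add_span.induct)
    case span_zero then show ?case using multiplier_zero[OF X w] Ia by (simp add: add_subgroup_def)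
  next
    case (span_gen z)
    then obtain x y where z: "z = x \<otimes> y" and xy: "x \<in> I" "y \<in> I" by blast
    then have "x \<in> X" "y \<in> X" using IX by auto
    then have "fst w z = x \<otimes> fst w y" "snd w z = snd w x \<otimes> y"
      and "fst w y \<in> X" "snd w x \<in> X" using w z unfolding is_multiplier_def by auto
    then show ?case using I xy unfolding ideal_in_def by auto
  next
    case (span_add x y)
    have "x \<in> X" "y \<in> X" using span_add(1,2) span IX by auto
    then have "fst w (x \<oplus> y) = fst w x \<oplus> fst w y" "snd w (x \<oplus> y) = snd w x \<oplus> snd w y"
      using w unfolding is_multiplier_def by auto
    then show ?case using span_add(3,4) Ia unfolding add_subgroup_def by auto
  next
    case (span_neg x)
    have "x \<in> X" using span_neg(1) span IX by auto
    then show ?case using span_neg(2) multiplier_neg[OF X w] Ia unfolding add_subgroup_def by auto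
  qed
qed

end

locale rng_pair = S: nonunital_ring S + S': nonunital_ring S' for S (structure) and S' (structure)
begin

lemma hom_zero:
  assumes "add_subgroup S A" "\<forall>x\<in>A. \<forall>y\<in>A. f (x \<oplus> y) = f x \<oplus>\<^bsub>S'\<^esub> f y" "f ` A \<subseteq> carrier S'"
  shows "f \<zero> = \<zero>\<^bsub>S'\<^esub>"
  using S'.additive_map_zero[OF S.is_abelian_group, of A f] assms by (auto simp: add_subgroup_def)

lemma hom_neg:
  assumes "add_subgroup S A" "\<forall>x\<in>A. \<forall>y\<in>A. f (x \<oplus> y) = f x \<oplus>\<^bsub>S'\<^esub> f y" "f ` A \<subseteq> carrier S'"
    and "x \<in> A"
  shows "f (\<ominus> x) = \<ominus>\<^bsub>S'\<^esub> f x"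
  using S'.additive_map_neg[OF S.is_abelian_group, of A f x] assms by auto

lemma hom_image_add_span:
  assumes A: "add_subgroup S A" and f: "\<forall>x\<in>A. \<forall>y\<in>A. f (x \<oplus> y) = f x \<oplus>\<^bsub>S'\<^esub> f y"
    and fA: "f ` A \<subseteq> carrier S'" and XA: "X \<subseteq> A"
  shows "f ` add_span S X = add_span S' (f ` X)"
proof
  have spA: "add_span S X \<subseteq> A" by (rule add_span_least[OF A XA])
  show "f ` add_span S X \<subseteq> add_span S' (f ` X)"
    by (rule add_span_image_subset)
      (use spA hom_zero[OF A f fA] hom_neg[OF A f fA] f in \<open>auto intro: add_span.intros\<close>)
  show "add_span S' (f ` X) \<subseteq> f ` add_span S X"
  proof
    fix y assume "y \<in> add_span S' (f ` X)"
    then show "y \<in> f ` add_span S X"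
    proof (induction rule: add_span.induct)
      case span_zero
      have "f \<zero> \<in> f ` add_span S X" by (rule imageI) (rule add_span.span_zero)
      then show ?case using hom_zero[OF A f fA] by simp
    next
      case (span_gen y) then show ?case by (auto intro: add_span.intros)
    next
      case (span_add x y)
      then obtain a b where ab: "x = f a" "y = f b" "a \<in> add_span S X" "b \<in> add_span S X" by blast
      then have "a \<in> A" "b \<in> A" using spA by auto
      then have "x \<oplus>\<^bsub>S'\<^esub> y = f (a \<oplus> b)" using f ab by auto
      then show ?case using ab by (auto intro: add_span.intros)
    next
      case (span_neg x)
      then obtain a where a: "x = f a" "a \<in> add_span S X" by blast
      then have "\<ominus>\<^bsub>S'\<^esub> x = f (\<ominus> a)" using hom_neg[OF A f fA] spA by auto
      then show ?case using a by (auto intro: add_span.intros)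
    qed
  qed
qed

lemma hom_image_idempotent:
  assumes A: "add_subgroup S A" and f: "rng_hom_on S S' A f" and fA: "f ` A \<subseteq> carrier S'"
    and IA: "I \<subseteq> A" and idem: "set_prod S I I = I"
  shows "set_prod S' (f ` I) (f ` I) = f ` I"
proof -
  have f1: "\<forall>x\<in>A. \<forall>y\<in>A. f (x \<oplus> y) = f x \<oplus>\<^bsub>S'\<^esub> f y" using f unfolding rng_hom_on_def by blast
  have XA: "{x \<otimes> y | x y. x \<in> I \<and> y \<in> I} \<subseteq> I" using idem unfolding set_prod_def
    by (auto intro: add_span.intros)
  have img: "f ` {x \<otimes> y | x y. x \<in> I \<and> y \<in> I} = {x \<otimes>\<^bsub>S'\<^esub> y | x y. x \<in> f ` I \<and> y \<in> f ` I}"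
  proof (intro equalityI subsetI)
    fix z assume "z \<in> f ` {x \<otimes> y | x y. x \<in> I \<and> y \<in> I}"
    then obtain x y where "z = f (x \<otimes> y)" "x \<in> I" "y \<in> I" by blast
    then show "z \<in> {x \<otimes>\<^bsub>S'\<^esub> y | x y. x \<in> f ` I \<and> y \<in> f ` I}"
      using f IA unfolding rng_hom_on_def by blast
  next
    fix z assume "z \<in> {x \<otimes>\<^bsub>S'\<^esub> y | x y. x \<in> f ` I \<and> y \<in> f ` I}"
    then obtain x y where z: "z = f x \<otimes>\<^bsub>S'\<^esub> f y" "x \<in> I" "y \<in> I" by blast
    then have "z = f (x \<otimes> y)" using f IA unfolding rng_hom_on_def by (metis subsetD)
    then show "z \<in> f ` {x \<otimes> y | x y. x \<in> I \<and> y \<in> I}" using z by blast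
  qed
  have "f ` I = f ` add_span S {x \<otimes> y | x y. x \<in> I \<and> y \<in> I}" using idem by (simp add: set_prod_def)
  also have "\<dots> = add_span S' (f ` {x \<otimes> y | x y. x \<in> I \<and> y \<in> I})"
    by (rule hom_image_add_span[OF A f1 fA]) (use XA IA in auto)
  finally show ?thesis using img by (simp add: set_prod_def)
qed

lemma iso_image_ideal_in:
  assumes X: "add_subgroup S X" and Y: "add_subgroup S' Y" and bij: "bij_betw f X Y" and f: "rng_hom_on S S' X f"
    and I: "ideal_in S I X"
  shows "ideal_in S' (f ` I) Y"
proof -
  have f1: "\<forall>x\<in>X. \<forall>y\<in>X. f (x \<oplus> y) = f x \<oplus>\<^bsub>S'\<^esub> f y" using f unfolding rng_hom_on_def by blast
  have fX: "f ` X \<subseteq> carrier S'" using bij Y by (auto simp: bij_betw_def add_subgroup_def)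
  have IX: "I \<subseteq> X" and Ia: "add_subgroup S I" using I by (auto simp: ideal_in_def)
  have fY: "f ` I \<subseteq> Y" using bij IX by (auto simp: bij_betw_def)
  have ad: "add_subgroup S' (f ` I)"
    unfolding add_subgroup_def
  proof (intro conjI ballI)
    show "f ` I \<subseteq> carrier S'" using fY Y by (auto simp: add_subgroup_def)
    have "f \<zero> \<in> f ` I" using Ia by (simp add: add_subgroup_def)
    thus "\<zero>\<^bsub>S'\<^esub> \<in> f ` I" using hom_zero[OF X f1 fX] by simp
    fix a b assume "a \<in> f ` I" "b \<in> f ` I"
    then obtain x y where "a = f x" "b = f y" "x \<in> I" "y \<in> I" by blast
    moreover have "x \<oplus> y \<in> I" using \<open>x \<in> I\<close> \<open>y \<in> I\<close> Ia unfolding add_subgroup_def by blast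
    moreover have "f (x \<oplus> y) = f x \<oplus>\<^bsub>S'\<^esub> f y" using f1 IX \<open>x \<in> I\<close> \<open>y \<in> I\<close> by blast
    ultimately show "a \<oplus>\<^bsub>S'\<^esub> b \<in> f ` I" by (metis image_eqI)
  next
    fix a assume "a \<in> f ` I"
    then obtain x where "a = f x" "x \<in> I" by blast
    moreover have "\<ominus> x \<in> I" using \<open>x \<in> I\<close> Ia unfolding add_subgroup_def by blast
    moreover have "f (\<ominus> x) = \<ominus>\<^bsub>S'\<^esub> f x" using hom_neg[OF X f1 fX] IX \<open>x \<in> I\<close> by blast
    ultimately show "\<ominus>\<^bsub>S'\<^esub> a \<in> f ` I" by (metis image_eqI)
  qed
  have mul: "y \<otimes>\<^bsub>S'\<^esub> a \<in> f ` I \<and> a \<otimes>\<^bsub>S'\<^esub> y \<in> f ` I" if yY: "y \<in> Y" and aI: "a \<in> f ` I" for y a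
  proof -
    obtain x where x: "x \<in> X" "y = f x" using bij yY unfolding bij_betw_def by blast
    obtain b where b: "b \<in> I" "a = f b" using aI by blast
    have "y \<otimes>\<^bsub>S'\<^esub> a = f (x \<otimes> b)" "a \<otimes>\<^bsub>S'\<^esub> y = f (b \<otimes> x)" using f x b IX unfolding rng_hom_on_def by auto
    moreover have "x \<otimes> b \<in> I" "b \<otimes> x \<in> I" using I x b unfolding ideal_in_def by auto
    ultimately show ?thesis by auto
  qed
  show ?thesis unfolding ideal_in_def using ad fY mul by blast
qed

lemma hom_finsum:
  assumes A: "add_subgroup S A" and f: "\<forall>x\<in>A. \<forall>y\<in>A. f (x \<oplus> y) = f x \<oplus>\<^bsub>S'\<^esub> f y"
    and fA: "f ` A \<subseteq> carrier S'" and fin: "finite K" and g: "\<forall>k\<in>K. g k \<in> A"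
  shows "f (finsum S g K) = finsum S' (\<lambda>k. f (g k)) K"
  using fin g
proof (induction K rule: finite_induct)
  case empty then show ?case using hom_zero[OF A f fA] by simp
next
  case (insert a K)
  have "g \<in> K \<rightarrow> carrier S" "g a \<in> carrier S" using insert(4) A by (auto simp: add_subgroup_def)
  then have "finsum S g (insert a K) = g a \<oplus> finsum S g K"
    using S.finsum_insert[OF insert(1,2)] by blast
  moreover have "(\<lambda>k. f (g k)) \<in> K \<rightarrow> carrier S'" "f (g a) \<in> carrier S'" using insert(4) fA by auto
  then have "finsum S' (\<lambda>k. f (g k)) (insert a K) = f (g a) \<oplus>\<^bsub>S'\<^esub> finsum S' (\<lambda>k. f (g k)) K"
    using S'.finsum_insert[OF insert(1,2)] by blast
  moreover have "finsum S g K \<in> A" using S.finsum_closed_add_subgroup[OF A insert(1)] insert(4) by auto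
  ultimately show ?case using insert f by auto
qed

end

section \<open>Morita contexts from embedded subrings\<close>

lemma add_span_mono:
  assumes "X \<subseteq> Y" shows "add_span S X \<subseteq> add_span S Y"
proof
  fix x assume "x \<in> add_span S X"
  then show "x \<in> add_span S Y" by (induction rule: add_span.induct) (use assms in \<open>auto intro: add_span.intros\<close>)
qed

lemma (in abelian_group) abelian_group_restrict:
  assumes "add_subgroup G H" shows "abelian_group (G\<lparr>carrier := H\<rparr>)"
proof (rule abelian_groupI)
  have H: "H \<subseteq> carrier G" "\<zero> \<in> H" "\<And>x y. x \<in> H \<Longrightarrow> y \<in> H \<Longrightarrow> x \<oplus> y \<in> H"
    "\<And>x. x \<in> H \<Longrightarrow> \<ominus> x \<in> H" using assms unfolding add_subgroup_def by auto
  fix x y z assume "x \<in> carrier (G\<lparr>carrier := H\<rparr>)" "y \<in> carrier (G\<lparr>carrier := H\<rparr>)"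
    "z \<in> carrier (G\<lparr>carrier := H\<rparr>)"
  then have xyz: "x \<in> H" "y \<in> H" "z \<in> H" and xyz': "x \<in> carrier G" "y \<in> carrier G" "z \<in> carrier G"
    using H(1) by auto
  then show "x \<oplus>\<^bsub>G\<lparr>carrier := H\<rparr>\<^esub> y \<in> carrier (G\<lparr>carrier := H\<rparr>)"
    and "\<zero>\<^bsub>G\<lparr>carrier := H\<rparr>\<^esub> \<oplus>\<^bsub>G\<lparr>carrier := H\<rparr>\<^esub> x = x"
    using H(3) by simp_all
  show "x \<oplus>\<^bsub>G\<lparr>carrier := H\<rparr>\<^esub> y \<oplus>\<^bsub>G\<lparr>carrier := H\<rparr>\<^esub> z =
       x \<oplus>\<^bsub>G\<lparr>carrier := H\<rparr>\<^esub> (y \<oplus>\<^bsub>G\<lparr>carrier := H\<rparr>\<^esub> z)"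
    using xyz' by (simp add: a_assoc)
  show "x \<oplus>\<^bsub>G\<lparr>carrier := H\<rparr>\<^esub> y = y \<oplus>\<^bsub>G\<lparr>carrier := H\<rparr>\<^esub> x"
    using xyz' by (simp add: a_comm)
  show "\<exists>y\<in>carrier (G\<lparr>carrier := H\<rparr>). y \<oplus>\<^bsub>G\<lparr>carrier := H\<rparr>\<^esub> x = \<zero>\<^bsub>G\<lparr>carrier := H\<rparr>\<^esub>"
    using xyz H by (auto simp: l_neg intro!: bexI[of _ "\<ominus> x"])
qed (use assms in \<open>auto simp: add_subgroup_def\<close>)

text \<open>A ring \<open>A\<close> embedded by \<open>\<Phi>\<close> onto a subset \<open>P\<close> of a ring \<open>B\<close> is Morita related to \<open>B\<close> as soon as
  \<open>P\<close> lies in a right ideal \<open>M\<close> and a left ideal \<open>N\<close> of \<open>B\<close> with \<open>M N \<subseteq> P\<close>: \<open>M\<close> and \<open>N\<close> are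
  bimodules by multiplication in \<open>B\<close>, and both pairings are multiplication in \<open>B\<close>.\<close>
locale subring_morita_data =
  B: nonunital_ring B for A :: "('a, 'c) ring_scheme" and B :: "'b ring" (structure) +
  fixes \<Phi> :: "'a \<Rightarrow> 'b" and P M N :: "'b set"
  assumes A_abelian_group: "abelian_group A"
    and A_m_closed: "\<And>a a'. a \<in> carrier A \<Longrightarrow> a' \<in> carrier A \<Longrightarrow> a \<otimes>\<^bsub>A\<^esub> a' \<in> carrier A"
    and \<Phi>_bij: "bij_betw \<Phi> (carrier A) P"
    and \<Phi>_add: "\<And>a a'. a \<in> carrier A \<Longrightarrow> a' \<in> carrier A \<Longrightarrow> \<Phi> (a \<oplus>\<^bsub>A\<^esub> a') = \<Phi> a \<oplus> \<Phi> a'"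
    and \<Phi>_mult: "\<And>a a'. a \<in> carrier A \<Longrightarrow> a' \<in> carrier A \<Longrightarrow> \<Phi> (a \<otimes>\<^bsub>A\<^esub> a') = \<Phi> a \<otimes> \<Phi> a'"
    and M: "add_subgroup B M" and N: "add_subgroup B N"
    and P_subset_M: "P \<subseteq> M" and P_subset_N: "P \<subseteq> N"
    and M_right_ideal: "\<And>x b. x \<in> M \<Longrightarrow> b \<in> carrier B \<Longrightarrow> x \<otimes> b \<in> M"
    and N_left_ideal: "\<And>b y. b \<in> carrier B \<Longrightarrow> y \<in> N \<Longrightarrow> b \<otimes> y \<in> N"
    and MN_subset_P: "\<And>x y. x \<in> M \<Longrightarrow> y \<in> N \<Longrightarrow> x \<otimes> y \<in> P"
begin

sublocale A: abelian_group A by (rule A_abelian_group)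

definition \<Psi> :: "'b \<Rightarrow> 'a" where "\<Psi> = inv_into (carrier A) \<Phi>"

lemma M_carrier [simp]: "x \<in> M \<Longrightarrow> x \<in> carrier B"
  and N_carrier [simp]: "y \<in> N \<Longrightarrow> y \<in> carrier B"
  and P_carrier [simp]: "p \<in> P \<Longrightarrow> p \<in> carrier B"
  using M N P_subset_M unfolding add_subgroup_def by auto

lemma \<Phi>_in_P [simp]: "a \<in> carrier A \<Longrightarrow> \<Phi> a \<in> P"
  using \<Phi>_bij by (auto simp: bij_betw_def)

lemma \<Phi>_in_M [simp]: "a \<in> carrier A \<Longrightarrow> \<Phi> a \<in> M"
  and \<Phi>_in_N [simp]: "a \<in> carrier A \<Longrightarrow> \<Phi> a \<in> N"
  using P_subset_M P_subset_N by auto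

lemma \<Psi>_in_carrier [simp]: "p \<in> P \<Longrightarrow> \<Psi> p \<in> carrier A"
  and \<Phi>_\<Psi> [simp]: "p \<in> P \<Longrightarrow> \<Phi> (\<Psi> p) = p"
  and \<Psi>_\<Phi> [simp]: "a \<in> carrier A \<Longrightarrow> \<Psi> (\<Phi> a) = a"
  using \<Phi>_bij unfolding \<Psi>_def bij_betw_def
  by (auto intro: inv_into_into f_inv_into_f inv_into_f_f)

lemma \<Psi>_eqI: "a \<in> carrier A \<Longrightarrow> \<Phi> a = p \<Longrightarrow> \<Psi> p = a"
  by auto

lemma M_add [simp]: "x \<in> M \<Longrightarrow> x' \<in> M \<Longrightarrow> x \<oplus> x' \<in> M"
  and N_add [simp]: "y \<in> N \<Longrightarrow> y' \<in> N \<Longrightarrow> y \<oplus> y' \<in> N"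
  using M N unfolding add_subgroup_def by auto

lemma \<Psi>_add: "p \<in> P \<Longrightarrow> p' \<in> P \<Longrightarrow> \<Psi> (p \<oplus> p') = \<Psi> p \<oplus>\<^bsub>A\<^esub> \<Psi> p'"
  using A.a_closed by (intro \<Psi>_eqI) (auto simp: \<Phi>_add)

lemma \<Psi>_mult_left: "a \<in> carrier A \<Longrightarrow> p \<in> P \<Longrightarrow> \<Psi> (\<Phi> a \<otimes> p) = a \<otimes>\<^bsub>A\<^esub> \<Psi> p"
  by (intro \<Psi>_eqI) (auto simp: A_m_closed \<Phi>_mult)

lemma \<Psi>_mult_right: "a \<in> carrier A \<Longrightarrow> p \<in> P \<Longrightarrow> \<Psi> (p \<otimes> \<Phi> a) = \<Psi> p \<otimes>\<^bsub>A\<^esub> a"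
  by (intro \<Psi>_eqI) (auto simp: A_m_closed \<Phi>_mult)

abbreviation M_module :: "'b ring" where "M_module \<equiv> B\<lparr>carrier := M\<rparr>"
abbreviation N_module :: "'b ring" where "N_module \<equiv> B\<lparr>carrier := N\<rparr>"

lemma bimodule_M: "bimodule A B M_module (\<lambda>a x. \<Phi> a \<otimes> x) (\<otimes>)"
  unfolding bimodule_def
  using B.abelian_group_restrict[OF M] M_right_ideal
  by (auto simp: \<Phi>_add \<Phi>_mult B.l_distr B.r_distr B.m_assoc A.a_closed
      A_m_closed)

lemma bimodule_N: "bimodule B A N_module (\<otimes>) (\<lambda>y a. y \<otimes> \<Phi> a)"
  unfolding bimodule_def
  using B.abelian_group_restrict[OF N] N_left_ideal
  by (auto simp: \<Phi>_add \<Phi>_mult B.l_distr B.r_distr B.m_assoc A.a_closed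
      A_m_closed)

lemma pairing_M_N: "pairing A B M_module N_module (\<lambda>a x. \<Phi> a \<otimes> x) (\<otimes>) (\<otimes>) (\<lambda>y a. y \<otimes> \<Phi> a)
    (\<lambda>x y. \<Psi> (x \<otimes> y))"
proof -
  have "\<Psi> (x \<otimes> (y \<otimes> \<Phi> a)) = \<Psi> (x \<otimes> y) \<otimes>\<^bsub>A\<^esub> a" if "x \<in> M" "y \<in> N" "a \<in> carrier A" for x y a
    using that MN_subset_P \<Psi>_mult_right by (simp flip: B.m_assoc)
  then show ?thesis
    unfolding pairing_def using MN_subset_P M_right_ideal N_left_ideal
    by (auto simp: B.l_distr B.r_distr B.m_assoc \<Psi>_add \<Psi>_mult_left)
qed

lemma pairing_N_M: "pairing B A N_module M_module (\<otimes>) (\<lambda>y a. y \<otimes> \<Phi> a) (\<lambda>a x. \<Phi> a \<otimes> x) (\<otimes>) (\<otimes>)"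
  unfolding pairing_def by (auto simp: B.l_distr B.r_distr B.m_assoc)

lemma morita_context_M_N: "morita_context A B M_module N_module (\<lambda>a x. \<Phi> a \<otimes> x) (\<otimes>) (\<otimes>)
    (\<lambda>y a. y \<otimes> \<Phi> a) (\<lambda>x y. \<Psi> (x \<otimes> y)) (\<otimes>)"
  unfolding morita_context_def
  using bimodule_M bimodule_N pairing_M_N pairing_N_M MN_subset_P
  by (auto simp: B.m_assoc)

theorem morita_equivalent:
  assumes A_span: "carrier A \<subseteq> add_span A {a \<in> carrier A. \<exists>x\<in>M. \<exists>y\<in>N. \<Phi> a = x \<otimes> y}"
    and B_span: "carrier B \<subseteq> add_span B {y \<otimes> x | x y. x \<in> M \<and> y \<in> N}"
  shows "morita_equivalent A B TYPE('b) TYPE('b)"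
proof -
  have "{\<Psi> (x \<otimes> y) | x y. x \<in> M \<and> y \<in> N} \<subseteq> carrier A"
    using MN_subset_P by auto
  moreover have "{a \<in> carrier A. \<exists>x\<in>M. \<exists>y\<in>N. \<Phi> a = x \<otimes> y} \<subseteq> {\<Psi> (x \<otimes> y) | x y. x \<in> M \<and> y \<in> N}"
    by (fastforce dest: arg_cong[where f = \<Psi>])
  ultimately have "add_span A {\<Psi> (x \<otimes> y) | x y. x \<in> M \<and> y \<in> N} = carrier A"
    using A.add_span_subset_carrier add_span_mono A_span
    by (meson subset_antisym subset_trans)
  moreover have "{y \<otimes> x | x y. x \<in> M \<and> y \<in> N} \<subseteq> carrier B" by auto
  then have "add_span B {y \<otimes> x | x y. x \<in> M \<and> y \<in> N} = carrier B"
    using B.add_span_subset_carrier B_span by blast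
  ultimately show ?thesis
    unfolding morita_equivalent_def using morita_context_M_N by fastforce
qed

end

section \<open>Groupoids and twisted partial actions\<close>

locale grpd = fixes G and m :: "'g \<Rightarrow> 'g \<Rightarrow> 'g" and i assumes grp: "groupoid G m i"
begin

abbreviation "dd \<equiv> gdom m i"
abbreviation "rr \<equiv> gran m i"
abbreviation "cp \<equiv> composable m i"

lemma inv_in_G[simp]: "g \<in> G \<Longrightarrow> i g \<in> G" and inv_inv_G[simp]: "g \<in> G \<Longrightarrow> i (i g) = g"
  using grp unfolding groupoid_def by auto

lemma cp_def': "cp g h \<longleftrightarrow> dd g = rr h" by (simp add: composable_def)

lemma mult_in_G[simp]: "g \<in> G \<Longrightarrow> h \<in> G \<Longrightarrow> cp g h \<Longrightarrow> m g h \<in> G"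
  using grp unfolding groupoid_def by blast

lemma mult_inv_cancel: "g \<in> G \<Longrightarrow> h \<in> G \<Longrightarrow> cp g h \<Longrightarrow> m (i g) (m g h) = h \<and> m (m g h) (i h) = g"
  using grp unfolding groupoid_def by blast

lemma composable_assoc: "g \<in> G \<Longrightarrow> h \<in> G \<Longrightarrow> t \<in> G \<Longrightarrow> cp g h \<Longrightarrow> cp h t \<Longrightarrow>
   cp (m g h) t \<and> cp g (m h t) \<and> m (m g h) t = m g (m h t)"
  using grp unfolding groupoid_def by blast

lemma gpd_assoc: "g \<in> G \<Longrightarrow> h \<in> G \<Longrightarrow> t \<in> G \<Longrightarrow> cp g h \<Longrightarrow> cp h t \<Longrightarrow> m (m g h) t = m g (m h t)"
  using composable_assoc by blast

lemma cp_inv1[simp]: "g \<in> G \<Longrightarrow> cp g (i g)"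
  by (simp add: composable_def gdom_def gran_def)
lemma cp_inv2[simp]: "g \<in> G \<Longrightarrow> cp (i g) g"
  by (simp add: composable_def gdom_def gran_def)

lemma dom_in_G[simp]: "g \<in> G \<Longrightarrow> dd g \<in> G"
  unfolding gdom_def using mult_in_G[of "i g" g] by simp
lemma ran_in_G[simp]: "g \<in> G \<Longrightarrow> rr g \<in> G"
  unfolding gran_def using mult_in_G[of g "i g"] by simp

lemma d_prod[simp]: "g \<in> G \<Longrightarrow> h \<in> G \<Longrightarrow> cp g h \<Longrightarrow> dd (m g h) = dd h"
proof -
  assume a: "g \<in> G" "h \<in> G" "cp g h"
  have "cp (m g h) (i h)" using composable_assoc[of g h "i h"] a by simp
  thus ?thesis by (simp add: composable_def gran_def gdom_def a)
qed

lemma r_prod[simp]: "g \<in> G \<Longrightarrow> h \<in> G \<Longrightarrow> cp g h \<Longrightarrow> rr (m g h) = rr g"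
proof -
  assume a: "g \<in> G" "h \<in> G" "cp g h"
  have "cp (i g) (m g h)" using composable_assoc[of "i g" g h] a by simp
  thus ?thesis by (simp add: composable_def gran_def gdom_def a)
qed

lemma r_mult[simp]: "g \<in> G \<Longrightarrow> m (rr g) g = g"
  using mult_inv_cancel[of g "i g"] by (simp add: gran_def)
lemma d_mult[simp]: "g \<in> G \<Longrightarrow> m g (dd g) = g"
  using mult_inv_cancel[of "i g" g] by (simp add: gdom_def)

lemma r_inv[simp]: "g \<in> G \<Longrightarrow> rr (i g) = dd g"
  by (simp add: gran_def gdom_def)
lemma d_inv[simp]: "g \<in> G \<Longrightarrow> dd (i g) = rr g"
  by (simp add: gran_def gdom_def)

lemma d_r[simp]: "g \<in> G \<Longrightarrow> dd (rr g) = rr g"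
proof -
  assume g: "g \<in> G"
  have "rr g = m g (i g)" by (simp add: gran_def)
  hence "dd (rr g) = dd (i g)" using d_prod[of g "i g"] g by simp
  thus ?thesis using g by simp
qed
lemma r_d[simp]: "g \<in> G \<Longrightarrow> rr (dd g) = dd g"
proof -
  assume g: "g \<in> G"
  have "dd g = m (i g) g" by (simp add: gdom_def)
  hence "rr (dd g) = rr (i g)" using r_prod[of "i g" g] g by simp
  thus ?thesis using g by simp
qed
lemma r_r[simp]: "g \<in> G \<Longrightarrow> rr (rr g) = rr g"
proof -
  assume g: "g \<in> G"
  have "rr g = m g (i g)" by (simp add: gran_def)
  hence "rr (rr g) = rr g" using r_prod[of g "i g"] g by simp
  thus ?thesis .
qed
lemma d_d[simp]: "g \<in> G \<Longrightarrow> dd (dd g) = dd g"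
proof -
  assume g: "g \<in> G"
  have "dd g = m (i g) g" by (simp add: gdom_def)
  hence "dd (dd g) = dd g" using d_prod[of "i g" g] g by simp
  thus ?thesis .
qed

lemma cp_r[simp]: "g \<in> G \<Longrightarrow> cp (rr g) g" by (simp add: cp_def')
lemma cp_d[simp]: "g \<in> G \<Longrightarrow> cp g (dd g)" by (simp add: cp_def')

lemma ident_d[simp]: "g \<in> G \<Longrightarrow> dd g \<in> identities G m i"
  by (simp add: identities_def)
lemma ident_r[simp]: "g \<in> G \<Longrightarrow> rr g \<in> identities G m i"
proof -
  assume g: "g \<in> G"
  have "rr g = dd (i g)" using g by simp
  thus ?thesis using g by (metis inv_in_G ident_d)
qed
lemma left_quotient:
  assumes g: "g \<in> G" and h: "h \<in> G" and rh: "rr h = rr g"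
  shows "cp (i h) g" "cp h (m (i h) g)" "m h (m (i h) g) = g" "rr (m (i h) g) = dd h" "m (i h) g \<in> G"
proof -
  show c1: "cp (i h) g" using h rh by (simp add: cp_def')
  show G1: "m (i h) g \<in> G" using c1 g h by simp
  show r1: "rr (m (i h) g) = dd h" using c1 g h by simp
  show "cp h (m (i h) g)" using r1 by (simp add: cp_def')
  have "m h (m (i h) g) = m (m h (i h)) g" using gpd_assoc[of h "i h" g] c1 g h by simp
  also have "\<dots> = m (rr h) g" by (simp add: gran_def)
  also have "\<dots> = g" using rh g by simp
  finally show "m h (m (i h) g) = g" .
qed

lemma finite_pairs: "finite G \<Longrightarrow> finite {(g, h). g \<in> G \<and> h \<in> G \<and> cp g h \<and> m g h = k}"
  by (rule finite_subset[of _ "G \<times> G"]) auto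

end

locale twisted_pa = grpd G m i + nonunital_ring S for G and m :: "'g \<Rightarrow> 'g \<Rightarrow> 'g" and i and S (structure) +
  fixes D :: "'g \<Rightarrow> 'a set" and \<alpha> :: "'g \<Rightarrow> 'a \<Rightarrow> 'a" and w :: "'g \<Rightarrow> 'g \<Rightarrow> ('a \<Rightarrow> 'a) \<times> ('a \<Rightarrow> 'a)"
  assumes action: "twisted_partial_action G m i S D \<alpha> w"
begin

abbreviation alpha_inv :: "'g \<Rightarrow> 'a \<Rightarrow> 'a" where "alpha_inv g \<equiv> inv_into (D (i g)) (\<alpha> g)"

lemma D_ran_ideal: "g \<in> G \<Longrightarrow> ideal_in S (D (rr g)) (carrier S)"
  using action ideal_in_of_rng_ideal unfolding twisted_partial_action_def by (elim conjE) blast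

lemma D_ran_add_subgroup: "g \<in> G \<Longrightarrow> add_subgroup S (D (rr g))"
  using D_ran_ideal unfolding ideal_in_def by blast

lemma D_ideal: "g \<in> G \<Longrightarrow> ideal_in S (D g) (D (rr g))"
  using action ideal_in_of_rng_ideal_restrict D_ran_add_subgroup
  unfolding twisted_partial_action_def by (elim conjE) blast

lemma D_add_subgroup: "g \<in> G \<Longrightarrow> add_subgroup S (D g)"
  using D_ideal unfolding ideal_in_def by blast

lemma D_subset_ran: "g \<in> G \<Longrightarrow> D g \<subseteq> D (rr g)"
  using D_ideal unfolding ideal_in_def by blast

lemma D_carrier: "g \<in> G \<Longrightarrow> D g \<subseteq> carrier S"
  using D_add_subgroup unfolding add_subgroup_def by blast

lemma D_ran_mult_D: "g \<in> G \<Longrightarrow> x \<in> D (rr g) \<Longrightarrow> a \<in> D g \<Longrightarrow> x \<otimes> a \<in> D g \<and> a \<otimes> x \<in> D g"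
  using D_ideal unfolding ideal_in_def by blast

lemma alpha_bij: "g \<in> G \<Longrightarrow> bij_betw (\<alpha> g) (D (i g)) (D g)"
  using action unfolding twisted_partial_action_def by (elim conjE) blast
lemma alpha_hom: "g \<in> G \<Longrightarrow> rng_hom_on S S (D (i g)) (\<alpha> g)"
  using action unfolding twisted_partial_action_def by (elim conjE) blast

lemma w_invertible: "g \<in> G \<Longrightarrow> h \<in> G \<Longrightarrow> cp g h \<Longrightarrow> invertible_multiplier S (set_prod S (D g) (D (m g h))) (w g h)"
  using action unfolding twisted_partial_action_def by (elim conjE) blast

lemma alpha_id: "e \<in> identities G m i \<Longrightarrow> a \<in> D e \<Longrightarrow> \<alpha> e a = a"
  using action unfolding twisted_partial_action_def by (elim conjE) blast

lemma composable_triple_axioms: "g \<in> G \<Longrightarrow> h \<in> G \<Longrightarrow> t \<in> G \<Longrightarrow> cp g h \<Longrightarrow> cp h t \<Longrightarrow>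
        set_prod S (D g) (D g) = D g \<and>
        set_prod S (D g) (D h) = set_prod S (D h) (D g) \<and>
        \<alpha> g ` set_prod S (D (i g)) (D h) = set_prod S (D g) (D (m g h)) \<and>
        (\<forall>a\<in>set_prod S (D (i h)) (D (m (i h) (i g))). \<forall>w'.
            mult_inverse S (set_prod S (D g) (D (m g h))) (w g h) w' \<longrightarrow>
            \<alpha> g (\<alpha> h a) = fst w' (snd (w g h) (\<alpha> (m g h) a))) \<and>
        (\<forall>a\<in>D g. fst (w (rr g) g) a = a \<and> snd (w (rr g) g) a = a \<and>
                  fst (w g (dd g)) a = a \<and> snd (w g (dd g)) a = a) \<and>
        (\<forall>a\<in>set_prod S (set_prod S (D (i g)) (D h)) (D (m h t)).
            fst (w g (m h t)) (\<alpha> g (fst (w h t) a)) =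
            fst (w (m g h) t) (fst (w g h) (\<alpha> g a)))"
  by (rule action[unfolded twisted_partial_action_def, THEN conjunct2, THEN conjunct2,
      THEN conjunct2, THEN conjunct2, THEN conjunct2, rule_format]) simp_all

lemma D_idem: "g \<in> G \<Longrightarrow> set_prod S (D g) (D g) = D g"
  using composable_triple_axioms[of g "dd g" "dd g", THEN conjunct1] by (simp add: cp_def')

lemma alpha_image_set_prod: "g \<in> G \<Longrightarrow> h \<in> G \<Longrightarrow> cp g h \<Longrightarrow> \<alpha> g ` set_prod S (D (i g)) (D h) = set_prod S (D g) (D (m g h))"
  using composable_triple_axioms[of g h "dd h", THEN conjunct2, THEN conjunct2, THEN conjunct1] by (simp add: cp_def')

lemma alpha_alpha: "g \<in> G \<Longrightarrow> h \<in> G \<Longrightarrow> cp g h \<Longrightarrow> a \<in> set_prod S (D (i h)) (D (m (i h) (i g))) \<Longrightarrow>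
   mult_inverse S (set_prod S (D g) (D (m g h))) (w g h) w' \<Longrightarrow>
   \<alpha> g (\<alpha> h a) = fst w' (snd (w g h) (\<alpha> (m g h) a))"
  using composable_triple_axioms[of g h "dd h", THEN conjunct2, THEN conjunct2, THEN conjunct2, THEN conjunct1] by (simp add: cp_def' del: split_paired_All)

lemma w_unit: "g \<in> G \<Longrightarrow> a \<in> D g \<Longrightarrow> fst (w (rr g) g) a = a \<and> snd (w (rr g) g) a = a \<and>
                  fst (w g (dd g)) a = a \<and> snd (w g (dd g)) a = a"
  using composable_triple_axioms[of g "dd g" "dd g", THEN conjunct2, THEN conjunct2, THEN conjunct2, THEN conjunct2, THEN conjunct1] by (simp add: cp_def')

lemma cocycle: "g \<in> G \<Longrightarrow> h \<in> G \<Longrightarrow> t \<in> G \<Longrightarrow> cp g h \<Longrightarrow> cp h t \<Longrightarrow>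
  a \<in> set_prod S (set_prod S (D (i g)) (D h)) (D (m h t)) \<Longrightarrow>
  fst (w g (m h t)) (\<alpha> g (fst (w h t) a)) = fst (w (m g h) t) (fst (w g h) (\<alpha> g a))"
  using composable_triple_axioms[of g h t, THEN conjunct2, THEN conjunct2, THEN conjunct2, THEN conjunct2, THEN conjunct2] by blast

lemma D_inv_subset_dom: "g \<in> G \<Longrightarrow> D (i g) \<subseteq> D (dd g)"
  using D_subset_ran[of "i g"] by simp

lemma alpha_add: "g \<in> G \<Longrightarrow> x \<in> D (i g) \<Longrightarrow> y \<in> D (i g) \<Longrightarrow> \<alpha> g (x \<oplus> y) = \<alpha> g x \<oplus> \<alpha> g y"
  using alpha_hom unfolding rng_hom_on_def by blast
lemma alpha_mul: "g \<in> G \<Longrightarrow> x \<in> D (i g) \<Longrightarrow> y \<in> D (i g) \<Longrightarrow> \<alpha> g (x \<otimes> y) = \<alpha> g x \<otimes> \<alpha> g y"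
  using alpha_hom unfolding rng_hom_on_def by blast

lemma alpha_in: "g \<in> G \<Longrightarrow> x \<in> D (i g) \<Longrightarrow> \<alpha> g x \<in> D g"
  using alpha_bij unfolding bij_betw_def by blast

lemma alpha_inv_in: "g \<in> G \<Longrightarrow> x \<in> D g \<Longrightarrow> alpha_inv g x \<in> D (i g)"
  using alpha_bij by (metis bij_betw_def inv_into_into)
lemma alpha_alpha_inv: "g \<in> G \<Longrightarrow> x \<in> D g \<Longrightarrow> \<alpha> g (alpha_inv g x) = x"
  using alpha_bij by (metis bij_betw_def f_inv_into_f)
lemma alpha_inv_alpha: "g \<in> G \<Longrightarrow> x \<in> D (i g) \<Longrightarrow> alpha_inv g (\<alpha> g x) = x"
  using alpha_bij by (metis bij_betw_def inv_into_f_f)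

lemma alpha_zero: "g \<in> G \<Longrightarrow> \<alpha> g \<zero> = \<zero>"
proof -
  assume g: "g \<in> G"
  have "add_subgroup S (D (i g))" using g D_add_subgroup by simp
  moreover have "\<alpha> g ` D (i g) \<subseteq> carrier S" using alpha_in D_carrier g by blast
  ultimately show ?thesis using rng_pair.hom_zero[of S S "D (i g)" "\<alpha> g"] alpha_add g
    by (simp add: rng_pair_def nonunital_ring_axioms)
qed

lemma alpha_inv_zero: "g \<in> G \<Longrightarrow> alpha_inv g \<zero> = \<zero>"
proof -
  assume g: "g \<in> G"
  have "\<zero> \<in> D (i g)" using D_add_subgroup[of "i g"] g by (simp add: add_subgroup_def)
  thus ?thesis using alpha_inv_alpha[of g \<zero>] alpha_zero g by simp
qed

lemma alpha_inv_add: "g \<in> G \<Longrightarrow> x \<in> D g \<Longrightarrow> y \<in> D g \<Longrightarrow>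
  alpha_inv g (x \<oplus> y) = alpha_inv g x \<oplus> alpha_inv g y"
proof -
  assume g: "g \<in> G" and xy: "x \<in> D g" "y \<in> D g"
  let ?x = "alpha_inv g x" and ?y = "alpha_inv g y"
  have inn: "?x \<in> D (i g)" "?y \<in> D (i g)" using alpha_inv_in g xy by auto
  have s: "?x \<oplus> ?y \<in> D (i g)" using inn D_add_subgroup[of "i g"] g by (simp add: add_subgroup_def)
  have "\<alpha> g (?x \<oplus> ?y) = x \<oplus> y" using alpha_add[OF g inn] alpha_alpha_inv g xy by simp
  thus ?thesis using alpha_inv_alpha[OF g s] by simp
qed

lemma w_multiplier: "g \<in> G \<Longrightarrow> h \<in> G \<Longrightarrow> cp g h \<Longrightarrow> is_multiplier S (set_prod S (D g) (D (m g h))) (w g h)"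
  using w_invertible unfolding invertible_multiplier_def by blast

end

locale twisted_ga = twisted_pa +
  assumes glob: "global_action G m i D"
begin

lemma D_eq_ran: "g \<in> G \<Longrightarrow> D g = D (rr g)"
  using glob unfolding global_action_def by blast

lemma D_inv_eq_dom: "g \<in> G \<Longrightarrow> D (i g) = D (dd g)"
  using D_eq_ran[of "i g"] by simp

lemma D_ran_idem: "g \<in> G \<Longrightarrow> set_prod S (D (rr g)) (D (rr g)) = D (rr g)"
  using D_idem[of "rr g"] by simp

lemma set_prod_D_eq_ran: "g \<in> G \<Longrightarrow> h \<in> G \<Longrightarrow> cp g h \<Longrightarrow> set_prod S (D g) (D (m g h)) = D (rr g)"
  using D_ran_idem[of g] D_eq_ran[of g] D_eq_ran[of "m g h"] by simp

lemma w_multiplier_ran: "g \<in> G \<Longrightarrow> h \<in> G \<Longrightarrow> cp g h \<Longrightarrow> is_multiplier S (D (rr g)) (w g h)"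
  using w_multiplier set_prod_D_eq_ran by simp

lemma w_inverse_ran: "g \<in> G \<Longrightarrow> h \<in> G \<Longrightarrow> cp g h \<Longrightarrow> \<exists>w'. mult_inverse S (D (rr g)) (w g h) w'"
  using w_invertible set_prod_D_eq_ran unfolding invertible_multiplier_def by simp

lemma alpha_alpha_global:
  assumes g: "g \<in> G" and h: "h \<in> G" and gh: "cp g h" and a: "a \<in> D (dd h)"
    and w': "mult_inverse S (D (rr g)) (w g h) w'"
  shows "\<alpha> g (\<alpha> h a) = fst w' (snd (w g h) (\<alpha> (m g h) a))"
proof -
  have "cp (i h) (i g)" using g h gh by (simp add: cp_def')
  then have "set_prod S (D (i h)) (D (m (i h) (i g))) = D (dd h)"
    using D_eq_ran[of "m (i h) (i g)"] D_inv_eq_dom[OF h] D_ran_idem[of "i h"] g h by simp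
  then show ?thesis using alpha_alpha[OF g h gh] w' a set_prod_D_eq_ran[OF g h gh] by simp
qed

lemma cocycle_global:
  assumes g: "g \<in> G" and h: "h \<in> G" and t: "t \<in> G" and gh: "cp g h" and ht: "cp h t"
    and a: "a \<in> D (dd g)"
  shows "fst (w g (m h t)) (\<alpha> g (fst (w h t) a)) = fst (w (m g h) t) (fst (w g h) (\<alpha> g a))"
proof -
  have rh: "rr h = dd g" using gh by (simp add: cp_def')
  then have "D h = D (dd g)" "D (m h t) = D (dd g)" using D_eq_ran h t ht by simp_all
  then have "set_prod S (set_prod S (D (i g)) (D h)) (D (m h t)) = D (dd g)"
    using D_inv_eq_dom[OF g] D_ran_idem[OF h] rh by simp
  then show ?thesis using cocycle[OF g h t gh ht] a by simp
qed

end

section \<open>Twisted crossed products\<close>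

definition direct_sum :: "('a,'c) ring_scheme \<Rightarrow> 'g set \<Rightarrow> ('g \<Rightarrow> 'a set) \<Rightarrow> ('g \<Rightarrow> 'a) set" where
  "direct_sum S G C = {f. (\<forall>g\<in>G. f g \<in> C g) \<and> (\<forall>g. g \<notin> G \<longrightarrow> f g = \<zero>\<^bsub>S\<^esub>)}"

definition delta :: "('a,'c) ring_scheme \<Rightarrow> 'g \<Rightarrow> 'a \<Rightarrow> 'g \<Rightarrow> 'a" where
  "delta S g a = (\<lambda>k. if k = g then a else \<zero>\<^bsub>S\<^esub>)"

lemma direct_sum_mono: "(\<And>g. g \<in> G \<Longrightarrow> C g \<subseteq> C' g) \<Longrightarrow> direct_sum S G C \<subseteq> direct_sum S G C'"
  unfolding direct_sum_def by blast

lemma delta_in_direct_sum: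
  "g \<in> G \<Longrightarrow> a \<in> C g \<Longrightarrow> (\<And>k. k \<in> G \<Longrightarrow> \<zero>\<^bsub>S\<^esub> \<in> C k) \<Longrightarrow> delta S g a \<in> direct_sum S G C"
  unfolding delta_def direct_sum_def by auto

context nonunital_ring begin

lemma direct_sum_abelian_group:
  fixes X :: "('g \<Rightarrow> 'a, 'e) ring_scheme"
  assumes C: "\<forall>g\<in>G. add_subgroup S (C g)" and cX: "carrier X = direct_sum S G C"
    and aX: "add X = (\<lambda>f f' g. f g \<oplus> f' g)" and zX: "zero X = (\<lambda>_. \<zero>)"
  shows "abelian_group X"
proof (rule abelian_groupI)
  have Cc: "\<And>g x. g \<in> G \<Longrightarrow> x \<in> C g \<Longrightarrow> x \<in> carrier S" using C by (auto simp: add_subgroup_def)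
  fix x y z assume x: "x \<in> carrier X" and y: "y \<in> carrier X" and z: "z \<in> carrier X"
  show "x \<oplus>\<^bsub>X\<^esub> y \<in> carrier X" using x y C unfolding cX aX direct_sum_def add_subgroup_def by auto
  show "(x \<oplus>\<^bsub>X\<^esub> y) \<oplus>\<^bsub>X\<^esub> z = x \<oplus>\<^bsub>X\<^esub> (y \<oplus>\<^bsub>X\<^esub> z)"
    unfolding aX
  proof
    fix g show "x g \<oplus> y g \<oplus> z g = x g \<oplus> (y g \<oplus> z g)"
      using x y z Cc unfolding cX direct_sum_def by (cases "g \<in> G") (auto simp: a_assoc)
  qed
  show "x \<oplus>\<^bsub>X\<^esub> y = y \<oplus>\<^bsub>X\<^esub> x"
    unfolding aX
  proof
    fix g show "x g \<oplus> y g = y g \<oplus> x g"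
      using x y Cc unfolding cX direct_sum_def by (cases "g \<in> G") (auto simp: a_comm)
  qed
  show "\<zero>\<^bsub>X\<^esub> \<oplus>\<^bsub>X\<^esub> x = x"
    unfolding aX zX
  proof
    fix g show "\<zero> \<oplus> x g = x g"
      using x Cc unfolding cX direct_sum_def by (cases "g \<in> G") auto
  qed
  show "\<exists>y\<in>carrier X. y \<oplus>\<^bsub>X\<^esub> x = \<zero>\<^bsub>X\<^esub>"
  proof (intro bexI)
    show "(\<lambda>g. \<ominus> x g) \<oplus>\<^bsub>X\<^esub> x = \<zero>\<^bsub>X\<^esub>"
      unfolding aX zX
    proof
      fix g show "\<ominus> x g \<oplus> x g = \<zero>"
        using x Cc unfolding cX direct_sum_def by (cases "g \<in> G") (auto simp: l_neg)
    qed
    show "(\<lambda>g. \<ominus> x g) \<in> carrier X" using x C unfolding cX direct_sum_def add_subgroup_def by auto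
  qed
next
  show "\<zero>\<^bsub>X\<^esub> \<in> carrier X" using C unfolding cX zX direct_sum_def add_subgroup_def by auto
qed

lemma direct_sum_neg:
  fixes X :: "('g \<Rightarrow> 'a, 'e) ring_scheme"
  assumes C: "\<forall>g\<in>G. add_subgroup S (C g)" and cX: "carrier X = direct_sum S G C"
    and aX: "add X = (\<lambda>f f' g. f g \<oplus> f' g)" and zX: "zero X = (\<lambda>_. \<zero>)"
    and x: "x \<in> carrier X"
  shows "\<ominus>\<^bsub>X\<^esub> x = (\<lambda>g. \<ominus> x g)"
proof -
  interpret X: abelian_group X by (rule direct_sum_abelian_group[OF C cX aX zX])
  have Cc: "\<And>g x. g \<in> G \<Longrightarrow> x \<in> C g \<Longrightarrow> x \<in> carrier S" using C by (auto simp: add_subgroup_def)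
  have inn: "(\<lambda>g. \<ominus> x g) \<in> carrier X" using x C unfolding cX direct_sum_def add_subgroup_def by auto
  have "(\<lambda>g. \<ominus> x g) \<oplus>\<^bsub>X\<^esub> x = \<zero>\<^bsub>X\<^esub>"
    unfolding aX zX
  proof
    fix g show "\<ominus> x g \<oplus> x g = \<zero>"
      using x Cc unfolding cX direct_sum_def by (cases "g \<in> G") (auto simp: l_neg)
  qed
  thus ?thesis using X.minus_equality[OF _ x inn] by simp
qed

end

locale finite_twisted_pa = twisted_pa + assumes finG: "finite G"
begin

abbreviation "CP \<equiv> crossed_product G m i S D \<alpha> w"
abbreviation "pairs k \<equiv> {(g, h). g \<in> G \<and> h \<in> G \<and> cp g h \<and> m g h = k}"
text \<open>\<open>(a \<delta>\<^sub>g) (b \<delta>\<^sub>h) = tmult g h a b \<delta>\<^sub>g\<^sub>h\<close> for composable \<open>g\<close>, \<open>h\<close>.\<close>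
definition tmult where
  "tmult g h a b = fst (w g h) (\<alpha> g (alpha_inv g a \<otimes> b))"

lemma CP_carrier: "carrier CP = direct_sum S G D" by (simp add: crossed_product_def direct_sum_def)
lemma CP_add: "add CP = (\<lambda>f f' g. f g \<oplus> f' g)" by (simp add: crossed_product_def)
lemma CP_zero: "zero CP = (\<lambda>_. \<zero>)" by (simp add: crossed_product_def)
lemma CP_mult: "f \<otimes>\<^bsub>CP\<^esub> f' = (\<lambda>k. finsum S (\<lambda>p. tmult (fst p) (snd p) (f (fst p)) (f' (snd p))) (pairs k))"
  by (simp add: crossed_product_def tmult_def)

lemma D_add_subgroup_all: "\<forall>g\<in>G. add_subgroup S (D g)" using D_add_subgroup by blast

lemma CP_abelian: "abelian_group CP"
  by (rule direct_sum_abelian_group[OF D_add_subgroup_all CP_carrier CP_add CP_zero])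

lemma CP_neg: "f \<in> carrier CP \<Longrightarrow> \<ominus>\<^bsub>CP\<^esub> f = (\<lambda>g. \<ominus> f g)"
  by (rule direct_sum_neg[OF D_add_subgroup_all CP_carrier CP_add CP_zero])

lemma pairs_finite: "finite (pairs k)" using finite_pairs[OF finG] .

lemma alpha_inv_mult_in:
  assumes g: "g \<in> G" and h: "h \<in> G" and c: "cp g h" and a: "a \<in> D g" and b: "b \<in> D h"
  shows "alpha_inv g a \<otimes> b \<in> D (i g)"
    "alpha_inv g a \<otimes> b \<in> set_prod S (D (i g)) (D h)"
proof -
  have a': "alpha_inv g a \<in> D (i g)" using alpha_inv_in g a by simp
  have "b \<in> D (rr (i g))" using D_subset_ran[OF h] b c g by (auto simp: cp_def')
  thus "alpha_inv g a \<otimes> b \<in> D (i g)" using D_ran_mult_D[of "i g"] a' g by simp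
  show "alpha_inv g a \<otimes> b \<in> set_prod S (D (i g)) (D h)"
    using a' b by (rule set_prod_mult_mem)
qed

lemma set_prod_D_subset: "g \<in> G \<Longrightarrow> h \<in> G \<Longrightarrow> cp g h \<Longrightarrow> set_prod S (D g) (D (m g h)) \<subseteq> D (m g h)"
  using D_subset_ran[of g] by (intro set_prod_subset_right[OF D_ideal[of "m g h"]]) auto

lemma add_subgroup_set_prod: "add_subgroup S (set_prod S X Y)" if "X \<subseteq> carrier S" "Y \<subseteq> carrier S"
  unfolding set_prod_def using that by (intro add_subgroup_add_span) auto

lemma add_subgroup_set_prod_D: "g \<in> G \<Longrightarrow> h \<in> G \<Longrightarrow> add_subgroup S (set_prod S (D g) (D h))"
  by (rule add_subgroup_set_prod) (auto dest: D_carrier)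

lemma alpha_alpha_inv_mult_in:
  assumes g: "g \<in> G" and h: "h \<in> G" and c: "cp g h" and a: "a \<in> D g" and b: "b \<in> D h"
  shows "\<alpha> g (alpha_inv g a \<otimes> b) \<in> set_prod S (D g) (D (m g h))"
  using alpha_image_set_prod[OF g h c] alpha_inv_mult_in(2)[OF assms] by blast

lemma tmult_in_set_prod:
  assumes g: "g \<in> G" and h: "h \<in> G" and c: "cp g h" and a: "a \<in> D g" and b: "b \<in> D h"
  shows "tmult g h a b \<in> set_prod S (D g) (D (m g h))"
  using w_multiplier[OF g h c] alpha_alpha_inv_mult_in[OF assms] unfolding tmult_def is_multiplier_def by blast

lemma tmult_in:
  assumes g: "g \<in> G" and h: "h \<in> G" and c: "cp g h" and a: "a \<in> D g" and b: "b \<in> D h"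
  shows "tmult g h a b \<in> D (m g h)"
  using tmult_in_set_prod[OF assms] set_prod_D_subset[OF g h c] by blast

lemma tmult_zero_left:
  assumes g: "g \<in> G" and h: "h \<in> G" and c: "cp g h" and b: "b \<in> D h"
  shows "tmult g h \<zero> b = \<zero>"
proof -
  have bc: "b \<in> carrier S" using b D_carrier h by blast
  have "tmult g h \<zero> b = fst (w g h) \<zero>" unfolding tmult_def using alpha_inv_zero g bc alpha_zero by simp
  also have "\<dots> = \<zero>" using multiplier_zero[OF add_subgroup_set_prod_D w_multiplier[OF g h c]] g h c by simp
  finally show ?thesis .
qed

lemma tmult_zero_right:
  assumes g: "g \<in> G" and h: "h \<in> G" and c: "cp g h" and a: "a \<in> D g"
  shows "tmult g h a \<zero> = \<zero>"
proof -
  have ac: "alpha_inv g a \<in> carrier S" using alpha_inv_in[OF g a] D_carrier[of "i g"] inv_in_G[OF g] by blast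
  have "tmult g h a \<zero> = fst (w g h) \<zero>" unfolding tmult_def using ac g alpha_zero by simp
  also have "\<dots> = \<zero>" using multiplier_zero[OF add_subgroup_set_prod_D w_multiplier[OF g h c]] g h c by simp
  finally show ?thesis .
qed

lemma tmult_add_left:
  assumes g: "g \<in> G" and h: "h \<in> G" and c: "cp g h" and a: "a \<in> D g" "a' \<in> D g" and b: "b \<in> D h"
  shows "tmult g h (a \<oplus> a') b = tmult g h a b \<oplus> tmult g h a' b"
proof -
  let ?x = "alpha_inv g a" and ?x' = "alpha_inv g a'"
  have xc: "?x \<in> carrier S" "?x' \<in> carrier S" using alpha_inv_in[OF g] a D_carrier[of "i g"] inv_in_G[OF g] by blast+
  have bc: "b \<in> carrier S" using b D_carrier h by blast
  have p1: "?x \<otimes> b \<in> D (i g)" "?x' \<otimes> b \<in> D (i g)" using alpha_inv_mult_in(1)[OF g h c] a b by auto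
  have "tmult g h (a \<oplus> a') b = fst (w g h) (\<alpha> g (?x \<otimes> b \<oplus> ?x' \<otimes> b))"
    unfolding tmult_def using alpha_inv_add[OF g a] l_distr xc bc by simp
  also have "\<dots> = fst (w g h) (\<alpha> g (?x \<otimes> b) \<oplus> \<alpha> g (?x' \<otimes> b))" using alpha_add[OF g p1] by simp
  also have "\<dots> = tmult g h a b \<oplus> tmult g h a' b" unfolding tmult_def
    using w_multiplier[OF g h c] alpha_alpha_inv_mult_in[OF g h c] a b unfolding is_multiplier_def by blast
  finally show ?thesis .
qed

lemma tmult_add_right:
  assumes g: "g \<in> G" and h: "h \<in> G" and c: "cp g h" and a: "a \<in> D g" and b: "b \<in> D h" "b' \<in> D h"
  shows "tmult g h a (b \<oplus> b') = tmult g h a b \<oplus> tmult g h a b'"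
proof -
  let ?x = "alpha_inv g a"
  have xc: "?x \<in> carrier S" using alpha_inv_in[OF g] a D_carrier[of "i g"] inv_in_G[OF g] by blast
  have bc: "b \<in> carrier S" "b' \<in> carrier S" using b D_carrier h by blast+
  have p1: "?x \<otimes> b \<in> D (i g)" "?x \<otimes> b' \<in> D (i g)" using alpha_inv_mult_in(1)[OF g h c] a b by auto
  have "tmult g h a (b \<oplus> b') = fst (w g h) (\<alpha> g (?x \<otimes> b \<oplus> ?x \<otimes> b'))"
    unfolding tmult_def using r_distr xc bc by simp
  also have "\<dots> = fst (w g h) (\<alpha> g (?x \<otimes> b) \<oplus> \<alpha> g (?x \<otimes> b'))" using alpha_add[OF g p1] by simp
  also have "\<dots> = tmult g h a b \<oplus> tmult g h a b'" unfolding tmult_def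
    using w_multiplier[OF g h c] alpha_alpha_inv_mult_in[OF g h c] a b unfolding is_multiplier_def by blast
  finally show ?thesis .
qed

lemma direct_sum_mult_closed:
  assumes "\<forall>g\<in>G. C1 g \<subseteq> D g" and "\<forall>g\<in>G. C2 g \<subseteq> D g" and C3: "\<forall>k\<in>G. add_subgroup S (C3 k)"
    and C123: "\<And>g h a b. g \<in> G \<Longrightarrow> h \<in> G \<Longrightarrow> cp g h \<Longrightarrow> a \<in> C1 g \<Longrightarrow> b \<in> C2 h \<Longrightarrow> tmult g h a b \<in> C3 (m g h)"
    and f: "f \<in> direct_sum S G C1" and f': "f' \<in> direct_sum S G C2"
  shows "f \<otimes>\<^bsub>CP\<^esub> f' \<in> direct_sum S G C3"
  unfolding direct_sum_def CP_mult
proof (intro CollectI conjI ballI allI impI)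
  fix k assume k: "k \<in> G"
  have "tmult (fst p) (snd p) (f (fst p)) (f' (snd p)) \<in> C3 k" if "p \<in> pairs k" for p
    using that f f' C123 unfolding direct_sum_def by auto
  then show "finsum S (\<lambda>p. tmult (fst p) (snd p) (f (fst p)) (f' (snd p))) (pairs k) \<in> C3 k"
    using C3 k by (intro finsum_closed_add_subgroup[OF _ pairs_finite]) auto
next
  fix k assume "k \<notin> G"
  then have e: "pairs k = {}" by auto
  show "finsum S (\<lambda>p. tmult (fst p) (snd p) (f (fst p)) (f' (snd p))) (pairs k) = \<zero>" unfolding e by simp
qed

lemma CP_mult_closed: "f \<in> carrier CP \<Longrightarrow> f' \<in> carrier CP \<Longrightarrow> f \<otimes>\<^bsub>CP\<^esub> f' \<in> carrier CP"
  unfolding CP_carrier using D_add_subgroup tmult_in by (intro direct_sum_mult_closed) auto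

lemma tmult_funcset: "f \<in> carrier CP \<Longrightarrow> f' \<in> carrier CP \<Longrightarrow>
   (\<lambda>p. tmult (fst p) (snd p) (f (fst p)) (f' (snd p))) \<in> pairs k \<rightarrow> carrier S"
proof
  fix p assume f: "f \<in> carrier CP" and f': "f' \<in> carrier CP" and p: "p \<in> pairs k"
  obtain g h where gh: "p = (g, h)" "g \<in> G" "h \<in> G" "cp g h" "m g h = k" using p by blast
  have "f g \<in> D g" "f' h \<in> D h" using f f' gh unfolding CP_carrier direct_sum_def by auto
  hence "tmult g h (f g) (f' h) \<in> D (m g h)" using tmult_in gh by blast
  thus "tmult (fst p) (snd p) (f (fst p)) (f' (snd p)) \<in> carrier S" using gh D_carrier[of "m g h"] by auto
qed

lemma CP_mem_D: "f \<in> carrier CP \<Longrightarrow> g \<in> G \<Longrightarrow> f g \<in> D g"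
  unfolding CP_carrier direct_sum_def by blast

lemma CP_rdistr:
  assumes f: "f \<in> carrier CP" and f1: "f1 \<in> carrier CP" and f2: "f2 \<in> carrier CP"
  shows "f \<otimes>\<^bsub>CP\<^esub> (f1 \<oplus>\<^bsub>CP\<^esub> f2) = f \<otimes>\<^bsub>CP\<^esub> f1 \<oplus>\<^bsub>CP\<^esub> f \<otimes>\<^bsub>CP\<^esub> f2"
proof
  fix k
  let ?t = "\<lambda>f f' p. tmult (fst p) (snd p) (f (fst p)) (f' (snd p))"
  have "(f \<otimes>\<^bsub>CP\<^esub> (f1 \<oplus>\<^bsub>CP\<^esub> f2)) k = finsum S (\<lambda>p. ?t f f1 p \<oplus> ?t f f2 p) (pairs k)"
    unfolding CP_mult CP_add using tmult_funcset[OF f f1, of k] tmult_funcset[OF f f2, of k]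
    by (intro finsum_cong') (auto simp: tmult_add_right CP_mem_D f f1 f2)
  also have "\<dots> = (f \<otimes>\<^bsub>CP\<^esub> f1 \<oplus>\<^bsub>CP\<^esub> f \<otimes>\<^bsub>CP\<^esub> f2) k"
    unfolding CP_mult CP_add using tmult_funcset[OF f f1] tmult_funcset[OF f f2] by (intro finsum_addf) auto
  finally show "(f \<otimes>\<^bsub>CP\<^esub> (f1 \<oplus>\<^bsub>CP\<^esub> f2)) k = (f \<otimes>\<^bsub>CP\<^esub> f1 \<oplus>\<^bsub>CP\<^esub> f \<otimes>\<^bsub>CP\<^esub> f2) k" .
qed

lemma CP_ldistr:
  assumes f: "f \<in> carrier CP" and f1: "f1 \<in> carrier CP" and f2: "f2 \<in> carrier CP"
  shows "(f1 \<oplus>\<^bsub>CP\<^esub> f2) \<otimes>\<^bsub>CP\<^esub> f = f1 \<otimes>\<^bsub>CP\<^esub> f \<oplus>\<^bsub>CP\<^esub> f2 \<otimes>\<^bsub>CP\<^esub> f"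
proof
  fix k
  let ?t = "\<lambda>f f' p. tmult (fst p) (snd p) (f (fst p)) (f' (snd p))"
  have "((f1 \<oplus>\<^bsub>CP\<^esub> f2) \<otimes>\<^bsub>CP\<^esub> f) k = finsum S (\<lambda>p. ?t f1 f p \<oplus> ?t f2 f p) (pairs k)"
    unfolding CP_mult CP_add using tmult_funcset[OF f1 f, of k] tmult_funcset[OF f2 f, of k]
    by (intro finsum_cong') (auto simp: tmult_add_left CP_mem_D f f1 f2)
  also have "\<dots> = (f1 \<otimes>\<^bsub>CP\<^esub> f \<oplus>\<^bsub>CP\<^esub> f2 \<otimes>\<^bsub>CP\<^esub> f) k"
    unfolding CP_mult CP_add using tmult_funcset[OF f1 f] tmult_funcset[OF f2 f] by (intro finsum_addf) auto
  finally show "((f1 \<oplus>\<^bsub>CP\<^esub> f2) \<otimes>\<^bsub>CP\<^esub> f) k = (f1 \<otimes>\<^bsub>CP\<^esub> f \<oplus>\<^bsub>CP\<^esub> f2 \<otimes>\<^bsub>CP\<^esub> f) k" .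
qed

lemma zero_in_D: "g \<in> G \<Longrightarrow> \<zero> \<in> D g" using D_add_subgroup by (simp add: add_subgroup_def)

lemma CP_zero_closed: "zero CP \<in> carrier CP"
  unfolding CP_carrier CP_zero direct_sum_def using zero_in_D by auto

lemma CP_zero_mult: "f \<in> carrier CP \<Longrightarrow> zero CP \<otimes>\<^bsub>CP\<^esub> f = zero CP"
  unfolding CP_mult CP_zero
proof
  fix k assume f: "f \<in> carrier CP"
  have "finsum S (\<lambda>p. tmult (fst p) (snd p) \<zero> (f (snd p))) (pairs k) = finsum S (\<lambda>p. \<zero>) (pairs k)"
    using tmult_zero_left f by (intro finsum_cong') (auto simp: CP_mem_D)
  thus "finsum S (\<lambda>p. tmult (fst p) (snd p) \<zero> (f (snd p))) (pairs k) = \<zero>" by simp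
qed

lemma CP_mult_zero: "f \<in> carrier CP \<Longrightarrow> f \<otimes>\<^bsub>CP\<^esub> zero CP = zero CP"
  unfolding CP_mult CP_zero
proof
  fix k assume f: "f \<in> carrier CP"
  have "finsum S (\<lambda>p. tmult (fst p) (snd p) (f (fst p)) \<zero>) (pairs k) = finsum S (\<lambda>p. \<zero>) (pairs k)"
    using tmult_zero_right f by (intro finsum_cong') (auto simp: CP_mem_D)
  thus "finsum S (\<lambda>p. tmult (fst p) (snd p) (f (fst p)) \<zero>) (pairs k) = \<zero>" by simp
qed

lemma delta_closed: "g \<in> G \<Longrightarrow> a \<in> D g \<Longrightarrow> delta S g a \<in> carrier CP"
  unfolding CP_carrier direct_sum_def delta_def using zero_in_D by auto

lemma delta_in_D: "g \<in> G \<Longrightarrow> a \<in> D g \<Longrightarrow> k \<in> G \<Longrightarrow> delta S g a k \<in> D k"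
  unfolding delta_def using zero_in_D by auto

lemma tmult_delta_delta:
  assumes g: "g \<in> G" and h: "h \<in> G" and a: "a \<in> D g" and b: "b \<in> D h" and p: "p \<in> pairs k"
  shows "tmult (fst p) (snd p) (delta S g a (fst p)) (delta S h b (snd p)) =
    (if (g, h) = p then tmult g h a b else \<zero>)"
proof -
  obtain x y where xy: "p = (x, y)" "x \<in> G" "y \<in> G" "cp x y" using p by blast
  show ?thesis
  proof (cases "x = g")
    case False
    then show ?thesis using tmult_zero_left xy delta_in_D h b by (simp add: delta_def)
  next
    case True
    then show ?thesis using tmult_zero_right xy delta_in_D g a by (cases "y = h") (simp_all add: delta_def)
  qed
qed

lemma delta_mult_delta:
  assumes g: "g \<in> G" and h: "h \<in> G" and a: "a \<in> D g" and b: "b \<in> D h"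
  shows "delta S g a \<otimes>\<^bsub>CP\<^esub> delta S h b = (if cp g h then delta S (m g h) (tmult g h a b) else zero CP)"
  unfolding CP_mult
proof
  fix k
  have ab: "cp g h \<Longrightarrow> tmult g h a b \<in> carrier S"
    using tmult_in[OF g h _ a b] D_carrier[of "m g h"] mult_in_G[OF g h] by blast
  have "finsum S (\<lambda>p. tmult (fst p) (snd p) (delta S g a (fst p)) (delta S h b (snd p))) (pairs k)
     = finsum S (\<lambda>p. if (g, h) = p then tmult g h a b else \<zero>) (pairs k)"
    by (rule finsum_cong') (use ab tmult_delta_delta[OF g h a b] in auto)
  also have "\<dots> = (if cp g h then delta S (m g h) (tmult g h a b) else zero CP) k"
  proof (cases "cp g h \<and> m g h = k")
    case True
    then have "(g, h) \<in> pairs k" using g h by auto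
    then show ?thesis using finsum_singleton[OF _ pairs_finite, of "(g, h)" k "\<lambda>p. tmult g h a b"] ab True
      by (simp add: delta_def)
  next
    case False
    then have "finsum S (\<lambda>p. if (g, h) = p then tmult g h a b else \<zero>) (pairs k) = finsum S (\<lambda>p. \<zero>) (pairs k)"
      by (intro finsum_cong') auto
    then show ?thesis using False by (auto simp: delta_def CP_zero)
  qed
  finally show "finsum S (\<lambda>p. tmult (fst p) (snd p) (delta S g a (fst p)) (delta S h b (snd p))) (pairs k) =
      (if cp g h then delta S (m g h) (tmult g h a b) else zero CP) k" .
qed

lemma delta_add: "g \<in> G \<Longrightarrow> a \<in> D g \<Longrightarrow> b \<in> D g \<Longrightarrow> delta S g (a \<oplus> b) = delta S g a \<oplus>\<^bsub>CP\<^esub> delta S g b"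
  unfolding CP_add delta_def by auto

lemma delta_zero: "delta S g \<zero> = zero CP"
  unfolding CP_zero delta_def by auto

lemma delta_neg: assumes g: "g \<in> G" and a: "a \<in> D g" shows "delta S g (\<ominus> a) = \<ominus>\<^bsub>CP\<^esub> delta S g a"
proof -
  have "\<ominus>\<^bsub>CP\<^esub> delta S g a = (\<lambda>k. \<ominus> delta S g a k)" by (rule CP_neg[OF delta_closed[OF g a]])
  moreover have "(\<lambda>k. if k = g then \<ominus> a else \<zero>) = (\<lambda>k. \<ominus> (if k = g then a else \<zero>))"
    by (rule ext) simp
  ultimately show ?thesis by (simp add: delta_def)
qed

lemma CP_induct [consumes 1, case_names zero add delta]:
  assumes f: "f \<in> carrier CP" and Q0: "Q (zero CP)"
    and Qadd: "\<And>f f'. f \<in> carrier CP \<Longrightarrow> f' \<in> carrier CP \<Longrightarrow> Q f \<Longrightarrow> Q f' \<Longrightarrow> Q (f \<oplus>\<^bsub>CP\<^esub> f')"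
    and Qd: "\<And>g a. g \<in> G \<Longrightarrow> a \<in> D g \<Longrightarrow> Q (delta S g a)"
  shows "Q f"
proof -
  have fD: "\<And>k. k \<in> G \<Longrightarrow> f k \<in> D k" and f0: "\<And>k. k \<notin> G \<Longrightarrow> f k = \<zero>"
    using f unfolding CP_carrier direct_sum_def by auto
  have main: "finite X \<Longrightarrow> X \<subseteq> G \<Longrightarrow> Q (\<lambda>k. if k \<in> X then f k else \<zero>) \<and> (\<lambda>k. if k \<in> X then f k else \<zero>) \<in> carrier CP" for X
  proof (induction X rule: finite_induct)
    case empty
    have "(\<lambda>k. if k \<in> {} then f k else \<zero>) = zero CP" by (simp add: CP_zero)
    thus ?case using Q0 CP_zero_closed by simp
  next
    case (insert g X)
    have g: "g \<in> G" and XG: "X \<subseteq> G" using insert by auto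
    have IH: "Q (\<lambda>k. if k \<in> X then f k else \<zero>)" "(\<lambda>k. if k \<in> X then f k else \<zero>) \<in> carrier CP"
      using insert XG by auto
    have dg: "delta S g (f g) \<in> carrier CP" using delta_closed g fD by blast
    have eq: "(\<lambda>k. if k \<in> insert g X then f k else \<zero>) = (\<lambda>k. if k \<in> X then f k else \<zero>) \<oplus>\<^bsub>CP\<^esub> delta S g (f g)"
      unfolding CP_add delta_def
    proof
      fix k show "(if k \<in> insert g X then f k else \<zero>) = (if k \<in> X then f k else \<zero>) \<oplus> (if k = g then f g else \<zero>)"
        using insert(2) fD[of k] D_carrier[of k] f0[of k] by (cases "k \<in> G") auto
    qed
    have "Q ((\<lambda>k. if k \<in> X then f k else \<zero>) \<oplus>\<^bsub>CP\<^esub> delta S g (f g))"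
      using Qadd[OF IH(2) dg IH(1) Qd[OF g fD[OF g]]] .
    moreover have "(\<lambda>k. if k \<in> X then f k else \<zero>) \<oplus>\<^bsub>CP\<^esub> delta S g (f g) \<in> carrier CP"
      using abelian_groupE(1)[OF CP_abelian IH(2) dg] .
    ultimately show ?case using eq by simp
  qed
  have "(\<lambda>k. if k \<in> G then f k else \<zero>) = f" using f0 by auto
  thus ?thesis using main[OF finG] by simp
qed


lemma add_subgroup_direct_sum:
  assumes "\<And>g. g \<in> G \<Longrightarrow> add_subgroup S (C g)" and "\<And>g. g \<in> G \<Longrightarrow> C g \<subseteq> D g"
  shows "add_subgroup CP (direct_sum S G C)"
proof -
  have "direct_sum S G C \<subseteq> carrier CP" using assms(2) unfolding CP_carrier direct_sum_def by blast
  then show ?thesis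
    using assms(1) unfolding add_subgroup_def CP_add CP_zero
    by (auto simp: CP_neg direct_sum_def add_subgroup_def)
qed

lemma delta_add_span_subset:
  assumes g: "g \<in> G" and X: "add_span S X \<subseteq> D g"
    and gen: "\<And>x. x \<in> X \<Longrightarrow> delta S g x \<in> add_span CP Y"
  shows "delta S g ` add_span S X \<subseteq> add_span CP Y"
proof -
  have "\<And>x. x \<in> add_span S X \<Longrightarrow> x \<in> D g" using X by blast
  then show ?thesis
    by (intro add_span_image_subset) (auto simp: delta_zero delta_add[OF g] delta_neg[OF g] gen)
qed

lemma carrier_subset_add_span:
  assumes "\<And>g a. g \<in> G \<Longrightarrow> a \<in> D g \<Longrightarrow> delta S g a \<in> add_span CP Y"
  shows "carrier CP \<subseteq> add_span CP Y"
proof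
  fix f assume "f \<in> carrier CP"
  then show "f \<in> add_span CP Y"
    by (induction rule: CP_induct) (auto intro: add_span.intros assms)
qed

end

locale finite_twisted_ga = twisted_ga + finite_twisted_pa
begin

lemma tmult_global:
  assumes g: "g \<in> G" and h: "h \<in> G" and c: "cp g h" and a: "a \<in> D g" and b: "b \<in> D h"
  shows "tmult g h a b = fst (w g h) (a \<otimes> \<alpha> g b)"
proof -
  have a': "alpha_inv g a \<in> D (i g)" using alpha_inv_in g a by simp
  have b': "b \<in> D (i g)" using b D_eq_ran[OF h] D_inv_eq_dom[OF g] c by (simp add: cp_def')
  show ?thesis unfolding tmult_def using alpha_mul[OF g a' b'] alpha_alpha_inv[OF g a] by simp
qed

text \<open>Both sides of associativity reduce to the same normal form: on the right by the cocycle
  identity, on the left by writing \<open>\<alpha>\<^sub>g \<alpha>\<^sub>h\<close> as \<open>\<alpha>\<^sub>g\<^sub>h\<close> conjugated by \<open>w\<^sub>g\<^sub>,\<^sub>h\<close>.\<close>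
lemma tmult_tmult_right:
  assumes g: "g \<in> G" and h: "h \<in> G" and t: "t \<in> G" and gh: "cp g h" and ht: "cp h t"
    and a: "a \<in> D g" and b: "b \<in> D h" and c: "c \<in> D t"
  shows "tmult g (m h t) a (tmult h t b c)
    = fst (w (m g h) t) (fst (w g h) (\<alpha> g (alpha_inv g a \<otimes> (b \<otimes> \<alpha> h c))))"
proof -
  have mht: "m h t \<in> G" "cp g (m h t)" using composable_assoc[OF g h t gh ht] h t ht by auto
  have rh: "rr h = dd g" and rt: "rr t = dd h" using gh ht by (simp_all add: cp_def')
  have Dd: "D h = D (dd g)" "D (i g) = D (dd g)" "D t = D (dd h)" "D (i h) = D (dd h)"
    using D_eq_ran[OF h] D_eq_ran[OF t] D_inv_eq_dom[OF g] D_inv_eq_dom[OF h] rh rt by simp_all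
  let ?a' = "alpha_inv g a" and ?z = "b \<otimes> \<alpha> h c"
  have a': "?a' \<in> D (dd g)" using alpha_inv_in[OF g a] Dd by simp
  have "\<alpha> h c \<in> D (dd g)" using alpha_in[OF h] c Dd rh by simp
  then have z: "?z \<in> D (dd g)" using D_ran_mult_D[of "dd g" b] b g Dd by simp
  have wht: "is_multiplier S (D (dd g)) (w h t)" using w_multiplier_ran[OF h t ht] rh by simp
  then have wz: "fst (w h t) ?z \<in> D (dd g)" using z unfolding is_multiplier_def by blast
  have "tmult g (m h t) a (tmult h t b c) = fst (w g (m h t)) (a \<otimes> \<alpha> g (fst (w h t) ?z))"
    using tmult_global[OF g mht a] tmult_global[OF h t ht b c] tmult_in[OF h t ht b c] by simp
  also have "a \<otimes> \<alpha> g (fst (w h t) ?z) = \<alpha> g (?a' \<otimes> fst (w h t) ?z)"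
    using alpha_mul[OF g] a' wz Dd alpha_alpha_inv[OF g a] by simp
  also have "?a' \<otimes> fst (w h t) ?z = fst (w h t) (?a' \<otimes> ?z)"
    using wht a' z unfolding is_multiplier_def by simp
  also have "fst (w g (m h t)) (\<alpha> g (fst (w h t) (?a' \<otimes> ?z)))
      = fst (w (m g h) t) (fst (w g h) (\<alpha> g (?a' \<otimes> ?z)))"
    using cocycle_global[OF g h t gh ht] D_ran_mult_D[of "dd g" ?a' ?z] a' z g by simp
  finally show ?thesis .
qed

lemma tmult_tmult_left:
  assumes g: "g \<in> G" and h: "h \<in> G" and t: "t \<in> G" and gh: "cp g h" and ht: "cp h t"
    and a: "a \<in> D g" and b: "b \<in> D h" and c: "c \<in> D t"
  shows "tmult (m g h) t (tmult g h a b) c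
    = fst (w (m g h) t) (fst (w g h) (\<alpha> g (alpha_inv g a \<otimes> (b \<otimes> \<alpha> h c))))"
proof -
  have mgh: "m g h \<in> G" "cp (m g h) t" using composable_assoc[OF g h t gh ht] g h gh by auto
  have rh: "rr h = dd g" and rt: "rr t = dd h" using gh ht by (simp_all add: cp_def')
  have Dr: "D g = D (rr g)" "D (m g h) = D (rr g)" "D (i (m g h)) = D (dd h)"
    using D_eq_ran[OF g] D_eq_ran[OF mgh(1)] D_inv_eq_dom[OF mgh(1)] g h gh by simp_all
  have Dd: "D h = D (dd g)" "D (i g) = D (dd g)" "D t = D (dd h)" "D (i h) = D (dd h)"
    using D_eq_ran[OF h] D_eq_ran[OF t] D_inv_eq_dom[OF g] D_inv_eq_dom[OF h] rh rt by simp_all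
  let ?p = "a \<otimes> \<alpha> g b" and ?Z = "\<alpha> (m g h) c"
  have hc: "\<alpha> h c \<in> D (dd g)" using alpha_in[OF h] c Dd rh by simp
  have gb: "\<alpha> g b \<in> D (rr g)" and ghc: "\<alpha> g (\<alpha> h c) \<in> D (rr g)"
    using alpha_in[OF g] b hc Dd Dr by auto
  have p: "?p \<in> D (rr g)" using D_ran_mult_D[of "rr g" a "\<alpha> g b"] a gb g Dr by simp
  have Z: "?Z \<in> D (rr g)" using alpha_in[OF mgh(1)] c Dr Dd by simp
  obtain w' where w': "mult_inverse S (D (rr g)) (w g h) w'" using w_inverse_ran[OF g h gh] by blast
  have "\<alpha> g (alpha_inv g a \<otimes> (b \<otimes> \<alpha> h c)) = a \<otimes> (\<alpha> g b \<otimes> \<alpha> g (\<alpha> h c))"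
    using alpha_mul[OF g] alpha_inv_in[OF g a] D_ran_mult_D[of "dd g" b] b hc g Dd alpha_alpha_inv[OF g a]
    by simp
  also have "\<dots> = ?p \<otimes> \<alpha> g (\<alpha> h c)"
    using m_assoc a gb ghc D_carrier[OF g] Dr by (simp add: subsetD)
  also have "\<alpha> g (\<alpha> h c) = fst w' (snd (w g h) ?Z)"
    using alpha_alpha_global[OF g h gh _ w'] c Dd by simp
  finally have "fst (w g h) (\<alpha> g (alpha_inv g a \<otimes> (b \<otimes> \<alpha> h c))) = fst (w g h) ?p \<otimes> ?Z"
    using multiplier_inverse_cancel[OF w_multiplier_ran[OF g h gh] w' p Z] by simp
  then show ?thesis
    using tmult_global[OF mgh(1) t mgh(2) tmult_in[OF g h gh a b] c] tmult_global[OF g h gh a b] by simp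
qed

abbreviation CP_times (infixl "\<cdot>" 70) where "x \<cdot> y \<equiv> x \<otimes>\<^bsub>CP\<^esub> y"
abbreviation CP_plus (infixl "+++" 65) where "x +++ y \<equiv> x \<oplus>\<^bsub>CP\<^esub> y"

lemma CP_assoc_delta_delta_delta:
  assumes g: "g \<in> G" and h: "h \<in> G" and t: "t \<in> G" and a: "a \<in> D g" and b: "b \<in> D h" and c: "c \<in> D t"
  shows "(delta S g a \<cdot> delta S h b) \<cdot> delta S t c = delta S g a \<cdot> (delta S h b \<cdot> delta S t c)"
proof (cases "cp g h \<and> cp h t")
  case True
  then have gh: "cp g h" and ht: "cp h t" by auto
  have mgh: "m g h \<in> G" and mht: "m h t \<in> G" using g h t gh ht by auto
  have cght: "cp (m g h) t" and cgth: "cp g (m h t)" using composable_assoc[OF g h t gh ht] by auto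
  have x1: "tmult g h a b \<in> D (m g h)" and x2: "tmult h t b c \<in> D (m h t)" using tmult_in g h t gh ht a b c by auto
  have "(delta S g a \<cdot> delta S h b) \<cdot> delta S t c = delta S (m (m g h) t) (tmult (m g h) t (tmult g h a b) c)"
    using delta_mult_delta[OF g h a b] delta_mult_delta[OF mgh t x1 c] gh cght by simp
  also have "\<dots> = delta S (m g (m h t)) (tmult g (m h t) a (tmult h t b c))"
    using gpd_assoc[OF g h t gh ht] tmult_tmult_left[OF g h t gh ht a b c] tmult_tmult_right[OF g h t gh ht a b c] by simp
  also have "\<dots> = delta S g a \<cdot> (delta S h b \<cdot> delta S t c)"
    using delta_mult_delta[OF h t b c] delta_mult_delta[OF g mht a x2] ht cgth by simp
  finally show ?thesis .
next
  case False
  have "(delta S g a \<cdot> delta S h b) \<cdot> delta S t c = zero CP"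
  proof (cases "cp g h")
    case True
    then have "\<not> cp (m g h) t" using False g h by (simp add: cp_def')
    then show ?thesis using delta_mult_delta[OF g h a b] delta_mult_delta[OF _ t tmult_in[OF g h _ a b] c] True g h
      by simp
  qed (use delta_mult_delta[OF g h a b] CP_zero_mult[OF delta_closed[OF t c]] in simp)
  moreover have "delta S g a \<cdot> (delta S h b \<cdot> delta S t c) = zero CP"
  proof (cases "cp h t")
    case True
    then have "\<not> cp g (m h t)" using False h t by (simp add: cp_def')
    then show ?thesis using delta_mult_delta[OF h t b c] delta_mult_delta[OF g _ a tmult_in[OF h t _ b c]] True h t
      by simp
  qed (use delta_mult_delta[OF h t b c] CP_mult_zero[OF delta_closed[OF g a]] in simp)
  ultimately show ?thesis by simp
qed

lemma CP_assoc_delta_delta: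
  assumes g: "g \<in> G" and h: "h \<in> G" and a: "a \<in> D g" and b: "b \<in> D h" and f: "f \<in> carrier CP"
  shows "(delta S g a \<cdot> delta S h b) \<cdot> f = delta S g a \<cdot> (delta S h b \<cdot> f)"
  using f
proof (induction f rule: CP_induct)
  case zero
  have "delta S g a \<cdot> delta S h b \<in> carrier CP" using CP_mult_closed delta_closed g h a b by blast
  thus ?case using CP_mult_zero delta_closed g h a b by simp
next
  case (add f f')
  have da: "delta S g a \<in> carrier CP" and db: "delta S h b \<in> carrier CP" using delta_closed g h a b by auto
  have dab: "delta S g a \<cdot> delta S h b \<in> carrier CP" using CP_mult_closed da db by blast
  have "(delta S g a \<cdot> delta S h b) \<cdot> (f +++ f') = (delta S g a \<cdot> delta S h b) \<cdot> f +++ (delta S g a \<cdot> delta S h b) \<cdot> f'"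
    using CP_rdistr[OF dab add(1,2)] .
  also have "\<dots> = delta S g a \<cdot> (delta S h b \<cdot> f) +++ delta S g a \<cdot> (delta S h b \<cdot> f')" using add by simp
  also have "\<dots> = delta S g a \<cdot> (delta S h b \<cdot> f +++ delta S h b \<cdot> f')"
    using CP_rdistr[OF da CP_mult_closed[OF db add(1)] CP_mult_closed[OF db add(2)]] by simp
  also have "\<dots> = delta S g a \<cdot> (delta S h b \<cdot> (f +++ f'))" using CP_rdistr[OF db add(1,2)] by simp
  finally show ?case .
next
  case (delta t c) thus ?case using CP_assoc_delta_delta_delta[OF g h _ a b] by blast
qed

lemma CP_assoc_delta:
  assumes g: "g \<in> G" and a: "a \<in> D g" and f: "f \<in> carrier CP"
  shows "\<forall>f'\<in>carrier CP. (delta S g a \<cdot> f) \<cdot> f' = delta S g a \<cdot> (f \<cdot> f')"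
  using f
proof (induction f rule: CP_induct)
  case zero
  show ?case using CP_mult_zero CP_zero_mult delta_closed g a by simp
next
  case (add f1 f2)
  have da: "delta S g a \<in> carrier CP" using delta_closed g a by auto
  show ?case
  proof
    fix f' assume f': "f' \<in> carrier CP"
    have "(delta S g a \<cdot> (f1 +++ f2)) \<cdot> f' = (delta S g a \<cdot> f1) \<cdot> f' +++ (delta S g a \<cdot> f2) \<cdot> f'"
      using CP_rdistr[OF da add(1,2)] CP_ldistr[OF f' CP_mult_closed[OF da add(1)] CP_mult_closed[OF da add(2)]] by simp
    also have "\<dots> = delta S g a \<cdot> (f1 \<cdot> f') +++ delta S g a \<cdot> (f2 \<cdot> f')" using add f' by simp
    also have "\<dots> = delta S g a \<cdot> ((f1 +++ f2) \<cdot> f')"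
      using CP_rdistr[OF da CP_mult_closed[OF add(1) f'] CP_mult_closed[OF add(2) f']] CP_ldistr[OF f' add(1,2)] by simp
    finally show "(delta S g a \<cdot> (f1 +++ f2)) \<cdot> f' = delta S g a \<cdot> ((f1 +++ f2) \<cdot> f')" .
  qed
next
  case (delta h b) thus ?case using CP_assoc_delta_delta[OF g _ a] by blast
qed

lemma CP_assoc:
  assumes f: "f \<in> carrier CP" and f1: "f1 \<in> carrier CP" and f2: "f2 \<in> carrier CP"
  shows "(f \<cdot> f1) \<cdot> f2 = f \<cdot> (f1 \<cdot> f2)"
proof -
  have "\<forall>f1\<in>carrier CP. \<forall>f2\<in>carrier CP. (f \<cdot> f1) \<cdot> f2 = f \<cdot> (f1 \<cdot> f2)"
    using f
  proof (induction f rule: CP_induct)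
    case zero thus ?case using CP_zero_mult CP_mult_closed by simp
  next
    case (add x y)
    show ?case
    proof (intro ballI)
      fix f1 f2 assume f1: "f1 \<in> carrier CP" and f2: "f2 \<in> carrier CP"
      have "((x +++ y) \<cdot> f1) \<cdot> f2 = (x \<cdot> f1) \<cdot> f2 +++ (y \<cdot> f1) \<cdot> f2"
        using CP_ldistr[OF f1 add(1,2)] CP_ldistr[OF f2 CP_mult_closed[OF add(1) f1] CP_mult_closed[OF add(2) f1]] by simp
      also have "\<dots> = x \<cdot> (f1 \<cdot> f2) +++ y \<cdot> (f1 \<cdot> f2)" using add f1 f2 by simp
      also have "\<dots> = (x +++ y) \<cdot> (f1 \<cdot> f2)" using CP_ldistr[OF CP_mult_closed[OF f1 f2] add(1,2)] by simp
      finally show "((x +++ y) \<cdot> f1) \<cdot> f2 = (x +++ y) \<cdot> (f1 \<cdot> f2)" .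
    qed
  next
    case (delta g a) thus ?case using CP_assoc_delta by blast
  qed
  thus ?thesis using f1 f2 by blast
qed


lemma CP_rng: "rng CP"
  unfolding rng_def
  using CP_abelian CP_mult_closed CP_assoc CP_ldistr CP_rdistr by blast

end

section \<open>The crossed products of a partial action and of its globalization\<close>

locale globalization_setting =
  fixes G :: "'g set" and m :: "'g \<Rightarrow> 'g \<Rightarrow> 'g" and i :: "'g \<Rightarrow> 'g"
    and R :: "'a ring" and D :: "'g \<Rightarrow> 'a set" and \<alpha> :: "'g \<Rightarrow> 'a \<Rightarrow> 'a"
    and w :: "'g \<Rightarrow> 'g \<Rightarrow> ('a \<Rightarrow> 'a) \<times> ('a \<Rightarrow> 'a)"
    and T :: "'b ring" and E :: "'g \<Rightarrow> 'b set" and \<beta> :: "'g \<Rightarrow> 'b \<Rightarrow> 'b"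
    and u :: "'g \<Rightarrow> 'g \<Rightarrow> ('b \<Rightarrow> 'b) \<times> ('b \<Rightarrow> 'b)" and \<phi> :: "'g \<Rightarrow> 'a \<Rightarrow> 'b"
  assumes grp: "groupoid G m i" and finG: "finite G"
    and ringR: "ring R"
    and tpaR: "twisted_partial_action G m i R D \<alpha> w"
    and rngT: "rng T"
    and glob: "is_globalization G m i R D \<alpha> w T E \<beta> u \<phi>"
begin

lemma T_action: "twisted_partial_action G m i T E \<beta> u"
  and E_global: "global_action G m i E"
  using glob unfolding is_globalization_def by simp_all

sublocale grpd G m i by (unfold_locales) (rule grp)
sublocale Rr: nonunital_ring R
  \<comment> \<open>only the non-unital ring structure of \<open>R\<close> is used\<close>
  by unfold_locales (rule ring_imp_rng[OF ringR])
sublocale Tr: nonunital_ring T by unfold_locales (rule rngT)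
sublocale RT: rng_pair R T by unfold_locales
sublocale TT: rng_pair T T by unfold_locales
sublocale A: finite_twisted_pa G m i R D \<alpha> w
  by unfold_locales (auto simp: tpaR finG)
sublocale B: finite_twisted_ga G m i T E \<beta> u
  by unfold_locales (auto simp: T_action E_global finG)

definition "Pd k = \<phi> (rr k) ` D k"
definition "Qd k = \<beta> k ` (\<phi> (dd k) ` D (dd k))"

lemma phi_inj: "e \<in> identities G m i \<Longrightarrow> inj_on (\<phi> e) (D e)" using glob unfolding is_globalization_def by simp
lemma phi_into: "e \<in> identities G m i \<Longrightarrow> \<phi> e ` D e \<subseteq> E e" using glob unfolding is_globalization_def by simp
lemma phi_hom: "e \<in> identities G m i \<Longrightarrow> rng_hom_on R T (D e) (\<phi> e)" using glob unfolding is_globalization_def by simp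
lemma phi_ideal: "e \<in> identities G m i \<Longrightarrow> rng_ideal (\<phi> e ` D e) (T\<lparr>carrier := E e\<rparr>)" using glob unfolding is_globalization_def by simp

lemma E_span: "g \<in> G \<Longrightarrow> E g = ideal_sum T {\<beta> h ` (\<phi> (dd h) ` D (dd h)) | h. h \<in> G \<and> rr h = rr g}"
  using glob unfolding is_globalization_def by simp
lemma phi_D_eq: "g \<in> G \<Longrightarrow> \<phi> (rr g) ` D g = \<phi> (rr g) ` D (rr g) \<inter> \<beta> g ` (\<phi> (dd g) ` D (dd g))"
  using glob unfolding is_globalization_def by simp
lemma beta_phi: "g \<in> G \<Longrightarrow> a \<in> D (i g) \<Longrightarrow> \<beta> g (\<phi> (dd g) a) = \<phi> (rr g) (\<alpha> g a)"
  using glob unfolding is_globalization_def by simp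
lemma phi_w: "g \<in> G \<Longrightarrow> h \<in> G \<Longrightarrow> cp g h \<Longrightarrow> a \<in> set_prod R (D g) (D (m g h)) \<Longrightarrow>
   \<phi> (rr g) (fst (w g h) a) = fst (u g h) (\<phi> (rr g) a)"
  using glob unfolding is_globalization_def by simp

lemma E_add_subgroup: "g \<in> G \<Longrightarrow> add_subgroup T (E g)" using B.D_add_subgroup by blast

lemma phi_add: "g \<in> G \<Longrightarrow> x \<in> D (rr g) \<Longrightarrow> y \<in> D (rr g) \<Longrightarrow> \<phi> (rr g) (x \<oplus>\<^bsub>R\<^esub> y) = \<phi> (rr g) x \<oplus>\<^bsub>T\<^esub> \<phi> (rr g) y"
  using phi_hom[of "rr g"] unfolding rng_hom_on_def by auto
lemma phi_mult: "g \<in> G \<Longrightarrow> x \<in> D (rr g) \<Longrightarrow> y \<in> D (rr g) \<Longrightarrow> \<phi> (rr g) (x \<otimes>\<^bsub>R\<^esub> y) = \<phi> (rr g) x \<otimes>\<^bsub>T\<^esub> \<phi> (rr g) y"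
  using phi_hom[of "rr g"] unfolding rng_hom_on_def by auto
lemma phi_in_E: "g \<in> G \<Longrightarrow> x \<in> D (rr g) \<Longrightarrow> \<phi> (rr g) x \<in> E (rr g)"
  using phi_into[of "rr g"] by auto
lemma E_carrier: "g \<in> G \<Longrightarrow> E g \<subseteq> carrier T" using B.D_carrier by blast

lemma phi_image_carrier: "g \<in> G \<Longrightarrow> \<phi> (rr g) ` D (rr g) \<subseteq> carrier T"
  using phi_in_E E_carrier[of "rr g"] by auto

lemma Pd_ran_ideal: "g \<in> G \<Longrightarrow> ideal_in T (Pd (rr g)) (E g)"
proof -
  assume g: "g \<in> G"
  have "ideal_in T (\<phi> (rr g) ` D (rr g)) (E (rr g))"
    using Tr.ideal_in_of_rng_ideal_restrict[OF phi_ideal[of "rr g"] E_add_subgroup[of "rr g"]] g by simp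
  thus ?thesis using B.D_eq_ran[OF g] g by (simp add: Pd_def)
qed

lemma Pd_idem: "g \<in> G \<Longrightarrow> set_prod T (Pd g) (Pd g) = Pd g"
  unfolding Pd_def using phi_image_carrier
  by (intro RT.hom_image_idempotent[OF A.D_ran_add_subgroup phi_hom _ A.D_subset_ran A.D_idem]) auto

lemma Pd_ran_idem: "g \<in> G \<Longrightarrow> set_prod T (Pd (rr g)) (Pd (rr g)) = Pd (rr g)"
  using Pd_idem[of "rr g"] by simp

lemma phi_D_dom_ideal: "g \<in> G \<Longrightarrow> ideal_in T (\<phi> (dd g) ` D (dd g)) (E (i g))"
proof -
  assume g: "g \<in> G"
  have "ideal_in T (Pd (rr (dd g))) (E (dd g))" using Pd_ran_ideal[of "dd g"] g by simp
  thus ?thesis using g B.D_inv_eq_dom[OF g] by (simp add: Pd_def)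
qed

lemma Qd_ideal: "g \<in> G \<Longrightarrow> ideal_in T (Qd g) (E g)"
  unfolding Qd_def using B.D_add_subgroup B.alpha_bij B.alpha_hom phi_D_dom_ideal
  by (intro TT.iso_image_ideal_in[of "E (i g)" "E g" "\<beta> g"]) auto

lemma Qd_idem: "g \<in> G \<Longrightarrow> set_prod T (Qd g) (Qd g) = Qd g"
proof -
  assume g: "g \<in> G"
  have sub: "\<phi> (dd g) ` D (dd g) \<subseteq> E (i g)" using phi_D_dom_ideal[OF g] unfolding ideal_in_def by blast
  have idm: "set_prod T (\<phi> (dd g) ` D (dd g)) (\<phi> (dd g) ` D (dd g)) = \<phi> (dd g) ` D (dd g)"
    using Pd_idem[of "dd g"] g by (simp add: Pd_def)
  show ?thesis unfolding Qd_def using g B.alpha_in E_carrier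
    by (intro TT.hom_image_idempotent[OF B.D_add_subgroup B.alpha_hom _ sub idm]) auto
qed

lemma Pd_eq_Int: "g \<in> G \<Longrightarrow> Pd g = Pd (rr g) \<inter> Qd g"
  unfolding Pd_def Qd_def using phi_D_eq[of g] r_r[of g] by simp

lemma Pd_ideal: "g \<in> G \<Longrightarrow> ideal_in T (Pd g) (E g)"
proof -
  assume g: "g \<in> G"
  have "ideal_in T (Pd (rr g) \<inter> Qd g) (E g)" by (rule ideal_in_Int[OF Pd_ran_ideal[OF g] Qd_ideal[OF g]])
  thus ?thesis using Pd_eq_Int[OF g] by simp
qed

lemma Pd_subset_Qd: "g \<in> G \<Longrightarrow> Pd g \<subseteq> Qd g"
  and Pd_subset_Pd_ran: "g \<in> G \<Longrightarrow> Pd g \<subseteq> Pd (rr g)"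
  using Pd_eq_Int by blast+

lemma E_ran_ideals:
  assumes g: "g \<in> G"
  shows "ideal_in T (Pd (rr g)) (E (rr g))" "ideal_in T (Qd g) (E (rr g))" "ideal_in T (Pd g) (E (rr g))"
  using Pd_ran_ideal[OF g] Qd_ideal[OF g] Pd_ideal[OF g] B.D_eq_ran[OF g] by simp_all

lemma u_closed_ideal:
  assumes g: "g \<in> G" and I: "ideal_in T I (E (rr g))" and idm: "set_prod T I I = I" and x: "x \<in> I"
    and v: "is_multiplier T (E (rr g)) v"
  shows "fst v x \<in> I" "snd v x \<in> I"
  using Tr.multiplier_closed_idempotent_ideal[OF E_add_subgroup[of "rr g"] v I idm x] g by auto

text \<open>\<open>\<beta>\<^sub>g \<beta>\<^sub>h\<close> is \<open>\<beta>\<^sub>g\<^sub>h\<close> conjugated by \<open>u\<^sub>g\<^sub>,\<^sub>h\<close>, and multipliers preserve the idempotent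
  ideal \<open>Qd (g h)\<close>.\<close>
lemma beta_Qd:
  assumes g: "g \<in> G" and h: "h \<in> G" and c: "cp g h" and x: "x \<in> Qd h"
  shows "\<beta> g x \<in> Qd (m g h)"
proof -
  obtain s where s: "s \<in> \<phi> (dd h) ` D (dd h)" and xs: "x = \<beta> h s" using x unfolding Qd_def by blast
  have sE: "s \<in> E (dd h)" using s phi_D_dom_ideal[OF h] B.D_inv_eq_dom[OF h] unfolding ideal_in_def by auto
  have mgh: "m g h \<in> G" using g h c by simp
  obtain w' where w': "mult_inverse T (E (rr g)) (u g h) w'" using B.w_inverse_ran[OF g h c] by blast
  have I: "ideal_in T (Qd (m g h)) (E (rr g))" using E_ran_ideals(2)[OF mgh] g h c by simp
  have "\<beta> (m g h) s \<in> Qd (m g h)" unfolding Qd_def using s g h c by simp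
  then have "snd (u g h) (\<beta> (m g h) s) \<in> Qd (m g h)"
    using u_closed_ideal[OF g I Qd_idem[OF mgh] _ B.w_multiplier_ran[OF g h c]] by simp
  then have "fst w' (snd (u g h) (\<beta> (m g h) s)) \<in> Qd (m g h)"
    using u_closed_ideal[OF g I Qd_idem[OF mgh]] w' unfolding mult_inverse_def by blast
  then show ?thesis using B.alpha_alpha_global[OF g h c sE w'] xs by simp
qed

lemma beta_alpha_inv_mult_Qd:
  assumes g: "g \<in> G" and h: "h \<in> G" and c: "cp g h" and a: "a \<in> E g" and b: "b \<in> Qd h"
  shows "\<beta> g (B.alpha_inv g a \<otimes>\<^bsub>T\<^esub> b) \<in> Qd (m g h)"
proof -
  have "B.alpha_inv g a \<in> E (rr h)" using B.alpha_inv_in[OF g a] B.D_inv_eq_dom[OF g] c by (simp add: cp_def')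
  then have "B.alpha_inv g a \<otimes>\<^bsub>T\<^esub> b \<in> Qd h" using E_ran_ideals(2)[OF h] b unfolding ideal_in_def by blast
  then show ?thesis using beta_Qd[OF g h c] by blast
qed

lemma tmult_Pd_ran:
  assumes g: "g \<in> G" and h: "h \<in> G" and c: "cp g h" and a: "a \<in> Pd (rr g)" and b: "b \<in> E h"
  shows "B.tmult g h a b \<in> Pd (rr (m g h))"
proof -
  have "a \<in> E g" using a Pd_ran_ideal[OF g] unfolding ideal_in_def by blast
  then have e: "B.tmult g h a b = fst (u g h) (a \<otimes>\<^bsub>T\<^esub> \<beta> g b)" using B.tmult_global[OF g h c _ b] by blast
  have "b \<in> E (i g)" using b B.D_eq_ran[OF h] B.D_inv_eq_dom[OF g] c by (simp add: cp_def')
  then have "\<beta> g b \<in> E (rr g)" using B.alpha_in[OF g] B.D_eq_ran[OF g] by simp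
  then have "a \<otimes>\<^bsub>T\<^esub> \<beta> g b \<in> Pd (rr g)" using E_ran_ideals(1)[OF g] a unfolding ideal_in_def by blast
  then show ?thesis
    using u_closed_ideal[OF g E_ran_ideals(1)[OF g] Pd_ran_idem[OF g] _ B.w_multiplier_ran[OF g h c]] e g h c
    by simp
qed

lemma tmult_Qd:
  assumes g: "g \<in> G" and h: "h \<in> G" and c: "cp g h" and a: "a \<in> E g" and b: "b \<in> Qd h"
  shows "B.tmult g h a b \<in> Qd (m g h)"
proof -
  have mgh: "m g h \<in> G" using g h c by simp
  have I: "ideal_in T (Qd (m g h)) (E (rr g))" using E_ran_ideals(2)[OF mgh] g h c by simp
  show ?thesis unfolding B.tmult_def
    using u_closed_ideal[OF g I Qd_idem[OF mgh] beta_alpha_inv_mult_Qd[OF assms] B.w_multiplier_ran[OF g h c]]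
    by simp
qed

text \<open>Here \<open>\<beta>\<^sub>g (\<beta>\<^sub>g\<^sup>-\<^sup>1 a b)\<close> lies in \<open>Qd (g h)\<close> by \<open>beta_Qd\<close> and equals \<open>a \<beta>\<^sub>g b \<in> Pd (r g)\<close>; the
  intersection of the two is \<open>Pd (g h)\<close>.\<close>
lemma tmult_Pd_Qd:
  assumes g: "g \<in> G" and h: "h \<in> G" and c: "cp g h" and a: "a \<in> Pd (rr g)" and b: "b \<in> Qd h"
  shows "B.tmult g h a b \<in> Pd (m g h)"
proof -
  have mgh: "m g h \<in> G" using g h c by simp
  have aE: "a \<in> E g" using a Pd_ran_ideal[OF g] unfolding ideal_in_def by blast
  have bE: "b \<in> E (i g)" using b Qd_ideal[OF h] B.D_eq_ran[OF h] B.D_inv_eq_dom[OF g] c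
    unfolding ideal_in_def by (auto simp: cp_def')
  let ?x = "\<beta> g (B.alpha_inv g a \<otimes>\<^bsub>T\<^esub> b)"
  have "?x = a \<otimes>\<^bsub>T\<^esub> \<beta> g b"
    using B.alpha_mul[OF g B.alpha_inv_in[OF g aE] bE] B.alpha_alpha_inv[OF g aE] by simp
  moreover have "\<beta> g b \<in> E (rr g)" using B.alpha_in[OF g bE] B.D_eq_ran[OF g] by simp
  ultimately have "?x \<in> Pd (rr (m g h))" using E_ran_ideals(1)[OF g] a g h c unfolding ideal_in_def by simp
  then have x: "?x \<in> Pd (m g h)"
    using Pd_eq_Int[OF mgh] beta_alpha_inv_mult_Qd[OF g h c aE b] by simp
  have I: "ideal_in T (Pd (m g h)) (E (rr g))" using E_ran_ideals(3)[OF mgh] g h c by simp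
  show ?thesis unfolding B.tmult_def
    using u_closed_ideal[OF g I Pd_idem[OF mgh] x B.w_multiplier_ran[OF g h c]] by simp
qed

definition "Phi f = (\<lambda>g. if g \<in> G then \<phi> (rr g) (f g) else \<zero>\<^bsub>T\<^esub>)"
definition "Mset = direct_sum T G (\<lambda>g. Pd (rr g))"
definition "Nset = direct_sum T G Qd"
definition "Pset = direct_sum T G Pd"

lemma Pset_subset_Mset: "Pset \<subseteq> Mset"
  unfolding Pset_def Mset_def by (rule direct_sum_mono) (rule Pd_subset_Pd_ran)

lemma Pset_subset_Nset: "Pset \<subseteq> Nset"
  unfolding Pset_def Nset_def by (rule direct_sum_mono) (rule Pd_subset_Qd)

lemma Pd_ran_add_subgroup: "\<forall>g\<in>G. add_subgroup T (Pd (rr g))"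
  and Qd_add_subgroup: "\<forall>g\<in>G. add_subgroup T (Qd g)"
  and Pd_add_subgroup: "\<forall>g\<in>G. add_subgroup T (Pd g)"
  and Pd_ran_subset_E: "\<forall>g\<in>G. Pd (rr g) \<subseteq> E g"
  and Qd_subset_E: "\<forall>g\<in>G. Qd g \<subseteq> E g"
  using Pd_ran_ideal Qd_ideal Pd_ideal unfolding ideal_in_def by blast+

lemma add_subgroup_Mset: "add_subgroup B.CP Mset"
  unfolding Mset_def using Pd_ran_add_subgroup Pd_ran_subset_E by (blast intro: B.add_subgroup_direct_sum)

lemma add_subgroup_Nset: "add_subgroup B.CP Nset"
  unfolding Nset_def using Qd_add_subgroup Qd_subset_E by (blast intro: B.add_subgroup_direct_sum)

lemma Mset_right_ideal: "x \<in> Mset \<Longrightarrow> b \<in> carrier B.CP \<Longrightarrow> x \<otimes>\<^bsub>B.CP\<^esub> b \<in> Mset"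
  unfolding Mset_def
  by (rule B.direct_sum_mult_closed[OF Pd_ran_subset_E _ Pd_ran_add_subgroup])
    (use tmult_Pd_ran B.CP_carrier in auto)

lemma Nset_left_ideal: "b \<in> carrier B.CP \<Longrightarrow> y \<in> Nset \<Longrightarrow> b \<otimes>\<^bsub>B.CP\<^esub> y \<in> Nset"
  unfolding Nset_def
  by (rule B.direct_sum_mult_closed[OF _ Qd_subset_E Qd_add_subgroup])
    (use tmult_Qd B.CP_carrier in auto)

lemma Mset_Nset_subset_Pset: "x \<in> Mset \<Longrightarrow> y \<in> Nset \<Longrightarrow> x \<otimes>\<^bsub>B.CP\<^esub> y \<in> Pset"
  unfolding Mset_def Nset_def Pset_def
  by (rule B.direct_sum_mult_closed[OF Pd_ran_subset_E Qd_subset_E Pd_add_subgroup])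
    (use tmult_Pd_Qd in auto)

lemma Phi_bij: "bij_betw Phi (carrier A.CP) Pset"
proof -
  let ?Psi = "\<lambda>p g. if g \<in> G then inv_into (D g) (\<phi> (rr g)) (p g) else \<zero>\<^bsub>R\<^esub>"
  have inj: "inj_on (\<phi> (rr g)) (D g)" if "g \<in> G" for g
    using phi_inj[of "rr g"] A.D_subset_ran[OF that] inj_on_subset that by simp
  have Psi_Phi: "?Psi (Phi f) = f" if "f \<in> carrier A.CP" for f
    using that inj unfolding Phi_def A.CP_carrier direct_sum_def by (auto intro!: ext simp: inv_into_f_f)
  have "inj_on Phi (carrier A.CP)"
  proof (rule inj_onI)
    fix f f' assume f: "f \<in> carrier A.CP" and f': "f' \<in> carrier A.CP" and eq: "Phi f = Phi f'"
    have "?Psi (Phi f) = ?Psi (Phi f')" by (simp only: eq)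
    then show "f = f'" by (simp only: Psi_Phi[OF f] Psi_Phi[OF f'])
  qed
  moreover have "Phi ` carrier A.CP \<subseteq> Pset"
    unfolding Phi_def Pset_def direct_sum_def A.CP_carrier Pd_def by auto
  moreover have "Pset \<subseteq> Phi ` carrier A.CP"
  proof
    fix p assume p: "p \<in> Pset"
    then have "Phi (?Psi p) = p" and "?Psi p \<in> carrier A.CP"
      unfolding Phi_def Pset_def direct_sum_def A.CP_carrier Pd_def
      by (auto intro!: ext intro: inv_into_into simp: f_inv_into_f)
    then show "p \<in> Phi ` carrier A.CP" by (rule image_eqI[OF sym])
  qed
  ultimately show ?thesis unfolding bij_betw_def by blast
qed

lemma phi_tmult:
  assumes g: "g \<in> G" and h: "h \<in> G" and c: "cp g h" and a: "a \<in> D g" and b: "b \<in> D h"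
  shows "\<phi> (rr g) (A.tmult g h a b) = B.tmult g h (\<phi> (rr g) a) (\<phi> (rr h) b)"
proof -
  let ?c = "A.alpha_inv g a"
  have c1: "?c \<in> D (i g)" using A.alpha_inv_in[OF g a] .
  have cd: "?c \<in> D (dd g)" using c1 A.D_inv_subset_dom[OF g] by blast
  have bd: "b \<in> D (dd g)" using b A.D_subset_ran[OF h] c by (auto simp: cp_def')
  have cb: "?c \<otimes>\<^bsub>R\<^esub> b \<in> D (i g)" using A.alpha_inv_mult_in(1)[OF g h c a b] .
  have "\<phi> (rr g) (A.tmult g h a b) = fst (u g h) (\<phi> (rr g) (\<alpha> g (?c \<otimes>\<^bsub>R\<^esub> b)))"
    unfolding A.tmult_def using phi_w[OF g h c A.alpha_alpha_inv_mult_in[OF g h c a b]] .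
  also have "\<phi> (rr g) (\<alpha> g (?c \<otimes>\<^bsub>R\<^esub> b)) = \<beta> g (\<phi> (dd g) ?c \<otimes>\<^bsub>T\<^esub> \<phi> (rr h) b)"
    using beta_phi[OF g cb] phi_hom[of "dd g"] cd bd g c unfolding rng_hom_on_def by (simp add: cp_def')
  also have "\<phi> (dd g) ?c = B.alpha_inv g (\<phi> (rr g) a)"
  proof -
    have "\<phi> (dd g) ?c \<in> E (i g)" using phi_into[of "dd g"] cd g B.D_inv_eq_dom[OF g] by auto
    then have "B.alpha_inv g (\<beta> g (\<phi> (dd g) ?c)) = \<phi> (dd g) ?c" by (rule B.alpha_inv_alpha[OF g])
    moreover have "\<beta> g (\<phi> (dd g) ?c) = \<phi> (rr g) a" using beta_phi[OF g c1] A.alpha_alpha_inv[OF g a] by simp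
    ultimately show ?thesis by simp
  qed
  finally show ?thesis unfolding B.tmult_def .
qed

lemma Phi_add: "f \<in> carrier A.CP \<Longrightarrow> f' \<in> carrier A.CP \<Longrightarrow> Phi (f \<oplus>\<^bsub>A.CP\<^esub> f') = Phi f \<oplus>\<^bsub>B.CP\<^esub> Phi f'"
  unfolding Phi_def A.CP_add B.CP_add A.CP_carrier direct_sum_def
  using phi_add A.D_subset_ran by (fastforce simp: fun_eq_iff)

lemma Phi_mult:
  assumes f: "f \<in> carrier A.CP" and f': "f' \<in> carrier A.CP"
  shows "Phi (f \<otimes>\<^bsub>A.CP\<^esub> f') = Phi f \<otimes>\<^bsub>B.CP\<^esub> Phi f'"
proof
  fix k
  show "Phi (f \<otimes>\<^bsub>A.CP\<^esub> f') k = (Phi f \<otimes>\<^bsub>B.CP\<^esub> Phi f') k"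
  proof (cases "k \<in> G")
    case False
    then have e: "A.pairs k = {}" by auto
    show ?thesis unfolding Phi_def B.CP_mult e using False by simp
  next
    case k: True
    have fD: "\<And>g. g \<in> G \<Longrightarrow> f g \<in> D g" and fD': "\<And>g. g \<in> G \<Longrightarrow> f' g \<in> D g"
      using f f' unfolding A.CP_carrier direct_sum_def by auto
    have terms: "\<forall>p\<in>A.pairs k. A.tmult (fst p) (snd p) (f (fst p)) (f' (snd p)) \<in> D (rr k)"
      using A.tmult_in fD fD' A.D_subset_ran[OF k] by fastforce
    have "Phi (f \<otimes>\<^bsub>A.CP\<^esub> f') k = \<phi> (rr k) (finsum R (\<lambda>p. A.tmult (fst p) (snd p) (f (fst p)) (f' (snd p))) (A.pairs k))"
      unfolding Phi_def A.CP_mult using k by simp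
    also have "\<dots> = finsum T (\<lambda>p. \<phi> (rr k) (A.tmult (fst p) (snd p) (f (fst p)) (f' (snd p)))) (A.pairs k)"
      using phi_add[OF k] phi_image_carrier[OF k]
      by (intro RT.hom_finsum[OF A.D_ran_add_subgroup[OF k] _ _ A.pairs_finite terms]) auto
    also have "\<dots> = finsum T (\<lambda>p. B.tmult (fst p) (snd p) (Phi f (fst p)) (Phi f' (snd p))) (A.pairs k)"
    proof (rule Tr.finsum_cong')
      have "Phi f \<in> carrier B.CP" "Phi f' \<in> carrier B.CP"
        using Phi_bij f f' Pset_subset_Mset add_subgroup_Mset
        unfolding bij_betw_def add_subgroup_def by auto
      then show "(\<lambda>p. B.tmult (fst p) (snd p) (Phi f (fst p)) (Phi f' (snd p))) \<in> A.pairs k \<rightarrow> carrier T"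
        by (rule B.tmult_funcset)
      fix p assume "p \<in> A.pairs k"
      then obtain g h where gh: "p = (g, h)" "g \<in> G" "h \<in> G" "cp g h" "m g h = k" by blast
      then show "\<phi> (rr k) (A.tmult (fst p) (snd p) (f (fst p)) (f' (snd p)))
          = B.tmult (fst p) (snd p) (Phi f (fst p)) (Phi f' (snd p))"
        using phi_tmult[OF gh(2,3,4) fD[OF gh(2)] fD'[OF gh(3)]] r_prod[OF gh(2,3,4)]
        unfolding Phi_def by simp
    qed simp
    also have "\<dots> = (Phi f \<otimes>\<^bsub>B.CP\<^esub> Phi f') k" unfolding B.CP_mult by simp
    finally show ?thesis .
  qed
qed

lemma subring_morita_data: "subring_morita_data A.CP B.CP Phi Pset Mset Nset"
proof (rule subring_morita_data.intro)
  show "nonunital_ring B.CP" by (rule nonunital_ring.intro[OF B.CP_rng])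
  show "subring_morita_data_axioms A.CP B.CP Phi Pset Mset Nset"
    by (rule subring_morita_data_axioms.intro)
      (use A.CP_abelian A.CP_mult_closed Phi_bij Phi_add Phi_mult add_subgroup_Mset add_subgroup_Nset
        Pset_subset_Mset Pset_subset_Nset Mset_right_ideal Nset_left_ideal Mset_Nset_subset_Pset in auto)
qed

lemma Phi_delta: "g \<in> G \<Longrightarrow> a \<in> D g \<Longrightarrow> Phi (delta R g a) = delta T g (\<phi> (rr g) a)"
  unfolding Phi_def delta_def
  using RT.hom_zero[OF A.D_ran_add_subgroup _ phi_image_carrier] phi_add by (auto intro!: ext)

text \<open>\<open>a b \<delta>\<^sub>g = (a \<delta>\<^sub>r\<^sub>(\<^sub>g\<^sub>)) (b \<delta>\<^sub>g)\<close> with \<open>a \<delta>\<^sub>r\<^sub>(\<^sub>g\<^sub>) \<in> M\<close>, \<open>b \<delta>\<^sub>g \<in> N\<close>, and \<open>D\<^sub>g = D\<^sub>g D\<^sub>g\<close>.\<close>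
lemma carrier_A_subset_span:
  "carrier A.CP \<subseteq> add_span A.CP {a \<in> carrier A.CP. \<exists>x\<in>Mset. \<exists>y\<in>Nset. Phi a = x \<otimes>\<^bsub>B.CP\<^esub> y}"
proof (rule A.carrier_subset_add_span)
  fix g a assume g: "g \<in> G" and a: "a \<in> D g"
  let ?e = "rr g"
  have "delta R g x \<in> add_span A.CP {a \<in> carrier A.CP. \<exists>x\<in>Mset. \<exists>y\<in>Nset. Phi a = x \<otimes>\<^bsub>B.CP\<^esub> y}"
    if xX: "x \<in> {x \<otimes>\<^bsub>R\<^esub> y | x y. x \<in> D g \<and> y \<in> D g}" for x
  proof (rule add_span.span_gen, safe)
    obtain x1 x2 where x: "x = x1 \<otimes>\<^bsub>R\<^esub> x2" and x12: "x1 \<in> D g" "x2 \<in> D g" using xX by blast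
    have e: "?e \<in> G" and x1e: "x1 \<in> D ?e" and x2e: "x2 \<in> D ?e" using g x12 A.D_subset_ran[OF g] by auto
    have xD: "x \<in> D g" using x x12 A.D_ran_mult_D[OF g] x1e by simp
    then show "delta R g x \<in> carrier A.CP" using A.delta_closed[OF g] by blast
    have "Phi (delta R ?e x1) \<in> Pset" "Phi (delta R g x2) \<in> Pset"
      using Phi_bij A.delta_closed e g x1e x12 unfolding bij_betw_def by auto
    then have MN: "Phi (delta R ?e x1) \<in> Mset" "Phi (delta R g x2) \<in> Nset"
      using Pset_subset_Mset Pset_subset_Nset by auto
    let ?a = "\<phi> ?e x1" and ?b = "\<phi> ?e x2"
    have aE: "?a \<in> E ?e" and bE: "?b \<in> E g" using phi_in_E[OF g] x1e x2e B.D_eq_ran[OF g] by auto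
    have "?a \<otimes>\<^bsub>T\<^esub> ?b \<in> E g" using B.D_ran_mult_D[of g ?a ?b] aE bE g by simp
    then have "B.tmult ?e g ?a ?b = ?a \<otimes>\<^bsub>T\<^esub> ?b"
      using B.tmult_global[of ?e g ?a ?b] aE bE g B.alpha_id[of ?e ?b] B.D_eq_ran[OF g] B.w_unit[OF g]
      by simp
    then have "Phi (delta R ?e x1) \<otimes>\<^bsub>B.CP\<^esub> Phi (delta R g x2) = Phi (delta R g x)"
      using Phi_delta[OF e x1e] Phi_delta[OF g x12(2)] Phi_delta[OF g xD] B.delta_mult_delta[OF e g aE bE]
        phi_mult[OF g x1e x2e] x g by simp
    then show "\<exists>x'\<in>Mset. \<exists>y\<in>Nset. Phi (delta R g x) = x' \<otimes>\<^bsub>B.CP\<^esub> y" using MN by metis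
  qed
  moreover have "add_span R {x \<otimes>\<^bsub>R\<^esub> y | x y. x \<in> D g \<and> y \<in> D g} = D g"
    using A.D_idem[OF g] by (simp add: set_prod_def)
  ultimately show "delta R g a \<in> add_span A.CP {a \<in> carrier A.CP. \<exists>x\<in>Mset. \<exists>y\<in>Nset. Phi a = x \<otimes>\<^bsub>B.CP\<^esub> y}"
    using A.delta_add_span_subset[OF g, of "{x \<otimes>\<^bsub>R\<^esub> y | x y. x \<in> D g \<and> y \<in> D g}"] a by blast
qed

text \<open>With \<open>t = h\<^sup>-\<^sup>1 g\<close>: \<open>(q\<^sub>1 \<delta>\<^sub>h) (s \<delta>\<^sub>t) = (q\<^sub>1 \<beta>\<^sub>h s) u\<^sub>h\<^sub>,\<^sub>t \<delta>\<^sub>g\<close>, where \<open>q\<^sub>1 \<delta>\<^sub>h \<in> N\<close> and \<open>s \<delta>\<^sub>t \<in> M\<close>.\<close>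
lemma delta_u_mult_in_span:
  assumes g: "g \<in> G" and h: "h \<in> G" and rh: "rr h = rr g" and q: "q1 \<in> Qd h" "q2 \<in> Qd h"
  shows "delta T g (fst (u h (m (i h) g)) (q1 \<otimes>\<^bsub>T\<^esub> q2))
    \<in> add_span B.CP {y \<otimes>\<^bsub>B.CP\<^esub> x | x y. x \<in> Mset \<and> y \<in> Nset}"
proof -
  let ?t = "m (i h) g"
  have t: "?t \<in> G" and ht: "cp h ?t" and mht: "m h ?t = g" and rt: "rr ?t = dd h"
    using left_quotient[OF g h rh] by auto
  obtain s where s: "s \<in> \<phi> (dd h) ` D (dd h)" and q2s: "q2 = \<beta> h s" using q(2) unfolding Qd_def by blast
  have sPd: "s \<in> Pd (rr ?t)" using s rt h unfolding Pd_def by simp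
  have sE: "s \<in> E ?t" using sPd Pd_ran_ideal[OF t] unfolding ideal_in_def by blast
  have q1E: "q1 \<in> E h" using q(1) Qd_ideal[OF h] unfolding ideal_in_def by blast
  have N: "delta T h q1 \<in> Nset" and M: "delta T ?t s \<in> Mset"
    unfolding Nset_def Mset_def using q(1) sPd h t Qd_add_subgroup Pd_ran_add_subgroup
    by (auto intro!: delta_in_direct_sum simp: add_subgroup_def)
  have "delta T g (fst (u h ?t) (q1 \<otimes>\<^bsub>T\<^esub> q2)) = delta T h q1 \<otimes>\<^bsub>B.CP\<^esub> delta T ?t s"
    using B.delta_mult_delta[OF h t q1E sE] B.tmult_global[OF h t ht q1E sE] ht mht q2s by simp
  then show ?thesis using M N by (blast intro: add_span.span_gen)
qed

text \<open>\<open>Qd h\<close> is idempotent and stable under \<open>u\<^sub>h\<^sub>,\<^sub>t\<close> and its inverse, so it is spanned by the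
  elements \<open>(q\<^sub>1 q\<^sub>2) u\<^sub>h\<^sub>,\<^sub>t\<close>.\<close>
lemma delta_Qd_in_span:
  assumes g: "g \<in> G" and h: "h \<in> G" and rh: "rr h = rr g" and z: "z \<in> Qd h"
  shows "delta T g z \<in> add_span B.CP {y \<otimes>\<^bsub>B.CP\<^esub> x | x y. x \<in> Mset \<and> y \<in> Nset}"
proof -
  let ?t = "m (i h) g" and ?P = "{q1 \<otimes>\<^bsub>T\<^esub> q2 | q1 q2. q1 \<in> Qd h \<and> q2 \<in> Qd h}"
  have t: "?t \<in> G" and ht: "cp h ?t" using left_quotient[OF g h rh] by auto
  have v: "is_multiplier T (E (rr h)) (u h ?t)" using B.w_multiplier_ran[OF h t ht] .
  obtain v' where v': "mult_inverse T (E (rr h)) (u h ?t) v'" using B.w_inverse_ran[OF h t ht] by blast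
  have QE: "Qd h \<subseteq> E (rr h)" using E_ran_ideals(2)[OF h] unfolding ideal_in_def by blast
  have span: "add_span T ?P = Qd h" using Qd_idem[OF h] by (simp add: set_prod_def)
  have uQ: "fst (u h ?t) ` Qd h \<subseteq> Qd h"
    using u_closed_ideal[OF h E_ran_ideals(2)[OF h] Qd_idem[OF h] _ v] by blast
  have "z = fst (u h ?t) (fst v' z)" and "fst v' z \<in> Qd h"
    using v' z QE u_closed_ideal[OF h E_ran_ideals(2)[OF h] Qd_idem[OF h] z] unfolding mult_inverse_def
    by auto
  then have z': "z \<in> fst (u h ?t) ` add_span T ?P" using span by blast
  have img: "fst (u h ?t) ` add_span T ?P = add_span T (fst (u h ?t) ` ?P)"
  proof (rule TT.hom_image_add_span)
    show "add_subgroup T (E (rr h))" using E_add_subgroup h by simp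
    show "\<forall>x\<in>E (rr h). \<forall>y\<in>E (rr h). fst (u h ?t) (x \<oplus>\<^bsub>T\<^esub> y) = fst (u h ?t) x \<oplus>\<^bsub>T\<^esub> fst (u h ?t) y"
      using multiplier_add[OF v] by blast
    show "fst (u h ?t) ` E (rr h) \<subseteq> carrier T"
      using v E_carrier[of "rr h"] h unfolding is_multiplier_def by auto
    show "?P \<subseteq> E (rr h)" using span QE by (auto intro: add_span.span_gen)
  qed
  have "add_span T (fst (u h ?t) ` ?P) = fst (u h ?t) ` Qd h" using img span by simp
  also have "\<dots> \<subseteq> E g" using uQ QE B.D_eq_ran[OF g] rh by simp
  finally have sub: "add_span T (fst (u h ?t) ` ?P) \<subseteq> E g" .
  have gen: "delta T g x \<in> add_span B.CP {y \<otimes>\<^bsub>B.CP\<^esub> x | x y. x \<in> Mset \<and> y \<in> Nset}"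
    if "x \<in> fst (u h ?t) ` ?P" for x
    using that delta_u_mult_in_span[OF g h rh] by blast
  have "z \<in> add_span T (fst (u h ?t) ` ?P)" using z' img by simp
  then show ?thesis using B.delta_add_span_subset[OF g sub gen] by blast
qed

lemma carrier_B_subset_span: "carrier B.CP \<subseteq> add_span B.CP {y \<otimes>\<^bsub>B.CP\<^esub> x | x y. x \<in> Mset \<and> y \<in> Nset}"
proof (rule B.carrier_subset_add_span)
  fix g a assume g: "g \<in> G" and a: "a \<in> E g"
  let ?Q = "\<Union>{\<beta> h ` (\<phi> (dd h) ` D (dd h)) | h. h \<in> G \<and> rr h = rr g}"
  have "add_span T ?Q = E g" using E_span[OF g] by (simp add: ideal_sum_def)
  moreover have "delta T g z \<in> add_span B.CP {y \<otimes>\<^bsub>B.CP\<^esub> x | x y. x \<in> Mset \<and> y \<in> Nset}" if "z \<in> ?Q" for z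
    using that delta_Qd_in_span[OF g] unfolding Qd_def by blast
  ultimately show "delta T g a \<in> add_span B.CP {y \<otimes>\<^bsub>B.CP\<^esub> x | x y. x \<in> Mset \<and> y \<in> Nset}"
    using B.delta_add_span_subset[OF g, of ?Q] a by blast
qed

theorem crossed_products_morita_equivalent: "morita_equivalent A.CP B.CP TYPE('g \<Rightarrow> 'b) TYPE('g \<Rightarrow> 'b)"
  by (rule subring_morita_data.morita_equivalent[OF subring_morita_data
        carrier_A_subset_span carrier_B_subset_span])

end

theorem mainTheorem4:
  fixes G :: "'g set" and m :: "'g \<Rightarrow> 'g \<Rightarrow> 'g" and i :: "'g \<Rightarrow> 'g"
    and R :: "'a ring" and D :: "'g \<Rightarrow> 'a set" and \<alpha> :: "'g \<Rightarrow> 'a \<Rightarrow> 'a"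
    and w :: "'g \<Rightarrow> 'g \<Rightarrow> ('a \<Rightarrow> 'a) \<times> ('a \<Rightarrow> 'a)"
    and T :: "'b ring" and E :: "'g \<Rightarrow> 'b set" and \<beta> :: "'g \<Rightarrow> 'b \<Rightarrow> 'b"
    and u :: "'g \<Rightarrow> 'g \<Rightarrow> ('b \<Rightarrow> 'b) \<times> ('b \<Rightarrow> 'b)" and \<phi> :: "'g \<Rightarrow> 'a \<Rightarrow> 'b"
  assumes "groupoid G m i" and "finite G"
    and "ring R"
    and "twisted_partial_action G m i R D \<alpha> w"
    and "rng T"
    and "is_globalization G m i R D \<alpha> w T E \<beta> u \<phi>"
  shows "morita_equivalent (crossed_product G m i R D \<alpha> w) (crossed_product G m i T E \<beta> u)
           TYPE('g \<Rightarrow> 'b) TYPE('g \<Rightarrow> 'b)"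
proof -
  interpret globalization_setting G m i R D \<alpha> w T E \<beta> u \<phi>
    by (rule globalization_setting.intro[OF assms])
  show ?thesis by (rule crossed_products_morita_equivalent)
qed

end
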